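(* Let $d\ge0$ and let $a\in\mathbb K[A]$ be an irreducible, homogeneous, isobaric element invariant under $UT_3$ (i.e. $D_1(a)=D_2(a)=D_3(a)=0$) with $\mathrm{ord}_1(a)=0$ and $\mathrm{ord}_2(a)=d$. Then: (i) the vector space $\bar C_d$ spanned by the elements $\frac{(-1)^{i+j}}{d(d-1)\cdots(d-i-j+1)}\hat D_2^{j}\hat D_3^{i}(a)$, $i+j\le d$, is an irreducible $\mathfrak{sl}_3$-submodule of $\mathbb K[A]$ isomorphic to $\Gamma_{0,d}$; (ii) the element $$\sum_{i+j\le d}\frac{(-1)^{i+j}}{i!\,j!}\,\hat D_2^{j}\hat D_3^{i}(a)\,u_3^{d-(i+j)}u_1^{i}u_2^{j}\in\mathbb K[A,u_1,u_2,u_3]$$ (the Casimir element of $\bar C_d$ and $S^d(\langle u_1,u_2,u_3\rangle)$ with respect to dual bases) is a contravariant of order $d$ of the ternary form of degree $n$.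
   Context: $\mathbb K$ is a field of characteristic $0$, $n\ge1$, $\mathbb K[A]=\mathbb K[a_{i,j}: i,j\ge0,\ i+j\le n]$ is the coordinate ring of the space of ternary forms $\sum_{i+j\le n}\frac{n!}{i!j!(n-i-j)!}a_{i,j}x_1^{n-i-j}x_2^ix_3^j$. $\mathfrak{sl}_3$ acts by derivations on $\mathbb K[A,u_1,u_2,u_3]$; the operators for $E_{12},E_{23},E_{13},E_{21},E_{32},E_{31},E_{11}-E_{22},E_{22}-E_{33}$ are $D_1,D_2,D_3,\hat D_1,\hat D_2,\hat D_3,E_1,E_2$. On generators of $\mathbb K[A]$ (with $a_{i,j}=0$ if an index is negative or $i+j>n$): $D_1(a_{i,j})=i a_{i-1,j}$, $D_2(a_{i,j})=j a_{i+1,j-1}$, $D_3(a_{i,j})=j a_{i,j-1}$, $\hat D_1(a_{i,j})=(n-i-j)a_{i+1,j}$, $\hat D_2(a_{i,j})=i a_{i-1,j+1}$, $\hat D_3(a_{i,j})=(n-i-j)a_{i,j+1}$, $E_1(a_{i,j})=(n-2i-j)a_{i,j}$, $E_2(a_{i,j})=(i-j)a_{i,j}$. On the $u$'s (dual of the standard module, $x_1u_1+x_2u_2+x_3u_3$ invariant): $D_1=u_1\partial_{u_2}$, $D_2=u_2\partial_{u_3}$, $D_3=u_1\partial_{u_3}$, $\hat D_1=u_2\partial_{u_1}$, $\hat D_2=u_3\partial_{u_2}$, $\hat D_3=u_3\partial_{u_1}$, $E_1=u_1\partial_{u_1}-u_2\partial_{u_2}$, $E_2=u_2\partial_{u_2}-u_3\partial_{u_3}$.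 Isobaric means an eigenvector of both $E_1,E_2$; $\mathrm{ord}_i(a)=\max\{s\ge0:\hat D_i^s(a)\ne0\}$. "Irreducible" element of $\mathbb K[A]^{UT_3}$ is used in the classical sense (nonzero, not a polynomial in $UT_3$-invariants of smaller degree). A contravariant of order $d$ is an element of $\mathbb K[A,u_1,u_2,u_3]$ homogeneous of degree $d$ in the $u$'s and annihilated by all these derivations (equivalently $SL_3$-invariant). $\Gamma_{m_1,m_2}$ denotes the irreducible finite-dimensional $\mathfrak{sl}_3$-module of highest weight $[m_1,m_2]$. *)

theory Defs
  imports Complex_Main "HOL-Library.Poly_Mapping"
begin

text \<open>Variables: A i j stands for the coefficient a_{i,j}; U k stands for u_k (k = 1,2,3).
  Polynomials are finitely supported maps from monomials (finitely supported exponent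
  vectors) to coefficients.\<close>

datatype var = A nat nat | U nat

type_synonym 'k mpoly = "(var \<Rightarrow>\<^sub>0 nat) \<Rightarrow>\<^sub>0 'k"

definition Const :: "'k::comm_ring_1 \<Rightarrow> 'k mpoly" where
  "Const c = Poly_Mapping.single 0 c"

definition Var :: "var \<Rightarrow> 'k::comm_ring_1 mpoly" where
  "Var x = Poly_Mapping.single (Poly_Mapping.single x 1) 1"

definition scl :: "'k::comm_ring_1 \<Rightarrow> 'k mpoly \<Rightarrow> 'k mpoly" where
  "scl c p = Const c * p"

definition vars :: "'k::comm_ring_1 mpoly \<Rightarrow> var set" where
  "vars p = \<Union> (Poly_Mapping.keys ` Poly_Mapping.keys p)"

definition tdeg :: "(var \<Rightarrow>\<^sub>0 nat) \<Rightarrow> nat" where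
  "tdeg m = (\<Sum>x\<in>Poly_Mapping.keys m. Poly_Mapping.lookup m x)"

definition udeg :: "(var \<Rightarrow>\<^sub>0 nat) \<Rightarrow> nat" where
  "udeg m = (\<Sum>x\<in>Poly_Mapping.keys m. (case x of U _ \<Rightarrow> Poly_Mapping.lookup m x | A _ _ \<Rightarrow> 0))"

definition pdeg :: "'k::comm_ring_1 mpoly \<Rightarrow> nat" where
  "pdeg p = (if p = 0 then 0 else Max (tdeg ` Poly_Mapping.keys p))"

definition homogeneous :: "'k::comm_ring_1 mpoly \<Rightarrow> bool" where
  "homogeneous p \<longleftrightarrow> (\<exists>k. \<forall>m\<in>Poly_Mapping.keys p. tdeg m = k)"

definition pdv :: "var \<Rightarrow> 'k::comm_ring_1 mpoly \<Rightarrow> 'k mpoly" where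
  "pdv x p = (\<Sum>m\<in>Poly_Mapping.keys p.
      Poly_Mapping.single (m - Poly_Mapping.single x 1) (of_nat (Poly_Mapping.lookup m x) * Poly_Mapping.lookup p m))"

definition der :: "(var \<Rightarrow> 'k::comm_ring_1 mpoly) \<Rightarrow> 'k mpoly \<Rightarrow> 'k mpoly" where
  "der g p = (\<Sum>x\<in>vars p. g x * pdv x p)"

definition KA :: "nat \<Rightarrow> 'k::comm_ring_1 mpoly set" where
  "KA n = {p. vars p \<subseteq> {A i j | i j. i + j \<le> n}}"

definition KAU :: "nat \<Rightarrow> 'k::comm_ring_1 mpoly set" where
  "KAU n = {p. vars p \<subseteq> {A i j | i j. i + j \<le> n} \<union> {U 1, U 2, U 3}}"

definition aa :: "nat \<Rightarrow> nat \<Rightarrow> nat \<Rightarrow> 'k::comm_ring_1 mpoly" where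
  "aa n i j = (if i + j \<le> n then Var (A i j) else 0)"

fun gD1 :: "nat \<Rightarrow> var \<Rightarrow> 'k::comm_ring_1 mpoly" where
  "gD1 n (A i j) = (if i + j \<le> n \<and> i \<ge> 1 then of_nat i * aa n (i - 1) j else 0)"
| "gD1 n (U k) = (if k = 2 then Var (U 1) else 0)"

fun gD2 :: "nat \<Rightarrow> var \<Rightarrow> 'k::comm_ring_1 mpoly" where
  "gD2 n (A i j) = (if i + j \<le> n \<and> j \<ge> 1 then of_nat j * aa n (i + 1) (j - 1) else 0)"
| "gD2 n (U k) = (if k = 3 then Var (U 2) else 0)"

fun gD3 :: "nat \<Rightarrow> var \<Rightarrow> 'k::comm_ring_1 mpoly" where
  "gD3 n (A i j) = (if i + j \<le> n \<and> j \<ge> 1 then of_nat j * aa n i (j - 1) else 0)"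
| "gD3 n (U k) = (if k = 3 then Var (U 1) else 0)"

fun gH1 :: "nat \<Rightarrow> var \<Rightarrow> 'k::comm_ring_1 mpoly" where
  "gH1 n (A i j) = (if i + j \<le> n then of_nat (n - i - j) * aa n (i + 1) j else 0)"
| "gH1 n (U k) = (if k = 1 then Var (U 2) else 0)"

fun gH2 :: "nat \<Rightarrow> var \<Rightarrow> 'k::comm_ring_1 mpoly" where
  "gH2 n (A i j) = (if i + j \<le> n \<and> i \<ge> 1 then of_nat i * aa n (i - 1) (j + 1) else 0)"
| "gH2 n (U k) = (if k = 2 then Var (U 3) else 0)"

fun gH3 :: "nat \<Rightarrow> var \<Rightarrow> 'k::comm_ring_1 mpoly" where
  "gH3 n (A i j) = (if i + j \<le> n then of_nat (n - i - j) * aa n i (j + 1) else 0)"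
| "gH3 n (U k) = (if k = 1 then Var (U 3) else 0)"

fun gE1 :: "nat \<Rightarrow> var \<Rightarrow> 'k::comm_ring_1 mpoly" where
  "gE1 n (A i j) = (if i + j \<le> n then of_int (int n - 2 * int i - int j) * aa n i j else 0)"
| "gE1 n (U k) = (if k = 1 then Var (U 1) else if k = 2 then - Var (U 2) else 0)"

fun gE2 :: "nat \<Rightarrow> var \<Rightarrow> 'k::comm_ring_1 mpoly" where
  "gE2 n (A i j) = (if i + j \<le> n then of_int (int i - int j) * aa n i j else 0)"
| "gE2 n (U k) = (if k = 2 then Var (U 2) else if k = 3 then - Var (U 3) else 0)"

definition D1 :: "nat \<Rightarrow> 'k::comm_ring_1 mpoly \<Rightarrow> 'k mpoly" where "D1 n = der (gD1 n)"
definition D2 :: "nat \<Rightarrow> 'k::comm_ring_1 mpoly \<Rightarrow> 'k mpoly" where "D2 n = der (gD2 n)"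
definition D3 :: "nat \<Rightarrow> 'k::comm_ring_1 mpoly \<Rightarrow> 'k mpoly" where "D3 n = der (gD3 n)"
definition Dh1 :: "nat \<Rightarrow> 'k::comm_ring_1 mpoly \<Rightarrow> 'k mpoly" where "Dh1 n = der (gH1 n)"
definition Dh2 :: "nat \<Rightarrow> 'k::comm_ring_1 mpoly \<Rightarrow> 'k mpoly" where "Dh2 n = der (gH2 n)"
definition Dh3 :: "nat \<Rightarrow> 'k::comm_ring_1 mpoly \<Rightarrow> 'k mpoly" where "Dh3 n = der (gH3 n)"
definition E1 :: "nat \<Rightarrow> 'k::comm_ring_1 mpoly \<Rightarrow> 'k mpoly" where "E1 n = der (gE1 n)"
definition E2 :: "nat \<Rightarrow> 'k::comm_ring_1 mpoly \<Rightarrow> 'k mpoly" where "E2 n = der (gE2 n)"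

definition sl3_ops :: "nat \<Rightarrow> ('k::comm_ring_1 mpoly \<Rightarrow> 'k mpoly) set" where
  "sl3_ops n = {D1 n, D2 n, D3 n, Dh1 n, Dh2 n, Dh3 n, E1 n, E2 n}"

definition isobaric :: "nat \<Rightarrow> 'k::comm_ring_1 mpoly \<Rightarrow> bool" where
  "isobaric n p \<longleftrightarrow> (\<exists>c1 c2. E1 n p = scl c1 p \<and> E2 n p = scl c2 p)"

definition UT3_inv :: "nat \<Rightarrow> 'k::comm_ring_1 mpoly \<Rightarrow> bool" where
  "UT3_inv n p \<longleftrightarrow> p \<in> KA n \<and> D1 n p = 0 \<and> D2 n p = 0 \<and> D3 n p = 0"

definition ord :: "('k::comm_ring_1 mpoly \<Rightarrow> 'k mpoly) \<Rightarrow> 'k mpoly \<Rightarrow> nat" where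
  "ord D p = (GREATEST s. (D ^^ s) p \<noteq> 0)"

inductive_set alg_gen :: "'k::comm_ring_1 mpoly set \<Rightarrow> 'k mpoly set" for S where
  const: "Const c \<in> alg_gen S"
| gen: "s \<in> S \<Longrightarrow> s \<in> alg_gen S"
| add: "p \<in> alg_gen S \<Longrightarrow> q \<in> alg_gen S \<Longrightarrow> p + q \<in> alg_gen S"
| mult: "p \<in> alg_gen S \<Longrightarrow> q \<in> alg_gen S \<Longrightarrow> p * q \<in> alg_gen S"

text \<open>irreducible UT3-invariant (classical sense): nonzero, not a polynomial in
  UT3-invariants of smaller degree\<close>
definition irreducible_UT3 :: "nat \<Rightarrow> 'k::comm_ring_1 mpoly \<Rightarrow> bool" where
  "irreducible_UT3 n a \<longleftrightarrow> a \<noteq> 0 \<and> UT3_inv n a \<and>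
     a \<notin> alg_gen {b. UT3_inv n b \<and> pdeg b < pdeg a}"

text \<open>V is an sl3-submodule of K[A] isomorphic to Gamma_{m1,m2}: a finite-dimensional
  subspace stable under the operators, irreducible, with a highest weight vector
  of weight [m1,m2].\<close>
definition sl3_submodule :: "nat \<Rightarrow> 'k::field mpoly set \<Rightarrow> bool" where
  "sl3_submodule n V \<longleftrightarrow> module.subspace scl V \<and> V \<subseteq> KA n \<and>
     (\<forall>D\<in>sl3_ops n. \<forall>v\<in>V. D v \<in> V)"

definition irreducible_sl3_submodule :: "nat \<Rightarrow> 'k::field mpoly set \<Rightarrow> bool" where
  "irreducible_sl3_submodule n V \<longleftrightarrow> sl3_submodule n V \<and> V \<noteq> {0} \<and>
     (\<forall>W. sl3_submodule n W \<and> W \<subseteq> V \<longrightarrow> W = {0} \<or> W = V)"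

definition iso_Gamma :: "nat \<Rightarrow> 'k::field mpoly set \<Rightarrow> nat \<Rightarrow> nat \<Rightarrow> bool" where
  "iso_Gamma n V m1 m2 \<longleftrightarrow> irreducible_sl3_submodule n V \<and>
     (\<exists>B. finite B \<and> V = module.span scl B) \<and>
     (\<exists>v\<in>V. v \<noteq> 0 \<and> D1 n v = 0 \<and> D2 n v = 0 \<and> D3 n v = 0 \<and>
        E1 n v = scl (of_nat m1) v \<and> E2 n v = scl (of_nat m2) v)"

definition contravariant :: "nat \<Rightarrow> nat \<Rightarrow> 'k::comm_ring_1 mpoly \<Rightarrow> bool" where
  "contravariant n d P \<longleftrightarrow> P \<in> KAU n \<and> (\<forall>m\<in>Poly_Mapping.keys P. udeg m = d) \<and>
     (\<forall>D\<in>sl3_ops n. D P = 0)"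

end

(*
  The hypotheses make a a highest weight vector of weight [0, d] for sl3 acting on K[A] by
  derivations: D1, D2, D3 kill a, Dh1 a = 0 and hence E1 a = [D1, Dh1] a = 0, and E2 a = d a
  because Dh2^d is the last power of Dh2 not killing a.  The vectors v i j = Dh2^j (Dh3^i a) are
  then computed from the commutation relations as in the representation theory of sl2: every
  operator sends v i j to a multiple of a neighbouring v, and v i j = 0 for i + j > d.  So their
  span is a submodule, and it is irreducible because for a nonzero element w, with (i0, j0) a
  term of w of maximal height i0 + j0, the operator D3^i0 D2^j0 kills all other terms and sends
  w to a nonzero multiple of a.  The Casimir element is annihilated by Dh1, Dh2 and D3 through
  telescoping sums over the triangle i + j <= d, and these three operators generate sl3.
*)
theory Submission
  imports Defs
begin

lemma finite_triangle: "finite {(i, j). i + j \<le> (d::nat)}"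
  by (rule finite_subset[of _ "{..d} \<times> {..d}"]) auto

lemma of_nat_diff_diff_neq_0:
  assumes "i + m < d"
  shows "(of_nat d - of_nat i - of_nat m :: 'k::field_char_0) \<noteq> 0"
proof -
  have "(of_nat (d - i - m) :: 'k) = of_nat d - of_nat i - of_nat m"
    using assms by (simp add: of_nat_diff)
  moreover have "(of_nat (d - i - m) :: 'k) \<noteq> 0"
    using assms by (simp del: of_nat_diff)
  ultimately show ?thesis
    by metis
qed

lemma sum_lessThan_Suc_shift_eq:
  fixes f g :: "nat \<Rightarrow> 'a::comm_monoid_add"
  assumes "f 0 = 0" "\<And>j. f (Suc j) = g j" "g d = 0"
  shows "(\<Sum>j<Suc d. f j) = (\<Sum>j<Suc d. g j)"
proof -
  have "(\<Sum>j<Suc d. f j) = f 0 + (\<Sum>j<d. f (Suc j))"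
    by (rule sum.lessThan_Suc_shift)
  also have "\<dots> = (\<Sum>j<Suc d. g j)"
    using assms by simp
  finally show ?thesis .
qed

section \<open>Scalars and monomials\<close>

lemma Const_0 [simp]: "Const 0 = (0 :: 'k::comm_ring_1 mpoly)"
  and Const_1 [simp]: "Const 1 = (1 :: 'k::comm_ring_1 mpoly)"
  and Const_add: "Const (a + b) = (Const a + Const b :: 'k::comm_ring_1 mpoly)"
  and Const_mult: "Const (a * b) = (Const a * Const b :: 'k::comm_ring_1 mpoly)"
  and Const_minus: "Const (- a) = (- Const a :: 'k::comm_ring_1 mpoly)"
  and Const_diff: "Const (a - b) = (Const a - Const b :: 'k::comm_ring_1 mpoly)"
  and Const_of_nat: "Const (of_nat m) = (of_nat m :: 'k::comm_ring_1 mpoly)"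
  and Const_of_int: "Const (of_int z) = (of_int z :: 'k::comm_ring_1 mpoly)"
  and Const_numeral: "Const (numeral w) = (numeral w :: 'k::comm_ring_1 mpoly)"
  by (simp_all add: Const_def single_add mult_single single_uminus single_diff)

lemmas Const_simps =
  Const_add Const_mult Const_minus Const_diff Const_of_nat Const_of_int Const_numeral

lemma scl_add_right: "scl c (p + q) = scl c p + scl c q"
  by (simp add: scl_def distrib_left)

lemma scl_add_left: "scl (a + b) p = scl a p + scl b p"
  by (simp add: scl_def Const_add distrib_right)

lemma scl_scl: "scl a (scl b p) = scl (a * b) p"
  by (simp add: scl_def Const_mult mult.assoc)

lemma scl_one [simp]: "scl 1 p = p"
  and scl_zero_left [simp]: "scl 0 p = 0"
  and scl_zero_right [simp]: "scl c 0 = 0"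
  by (simp_all add: scl_def)

lemma scl_minus_left: "scl (- c) p = - scl c p"
  by (simp add: scl_def Const_minus)

lemma scl_mult_left: "scl c p * q = scl c (p * q)"
  and scl_mult_right: "p * scl c q = scl c (p * q)"
  by (simp_all add: scl_def mult.assoc mult.left_commute)

lemma scl_eq_0_iff:
  fixes p :: "'k::field mpoly"
  shows "scl c p = 0 \<longleftrightarrow> c = 0 \<or> p = 0"
proof
  assume "scl c p = 0"
  then have "scl (inverse c) (scl c p) = 0" by simp
  then show "c = 0 \<or> p = 0" by (cases "c = 0") (simp_all add: scl_scl)
qed auto

interpretation SM: module "scl :: 'k::comm_ring_1 \<Rightarrow> 'k mpoly \<Rightarrow> 'k mpoly"
  by unfold_locales (simp_all add: scl_add_right scl_add_left scl_scl)

lemma span_image_eq_sum: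
  assumes "finite T" "x \<in> SM.span (f ` T)"
  shows "\<exists>c. x = (\<Sum>t\<in>T. scl (c t) (f t))"
  using assms(2)
proof (induction rule: SM.span_induct_alt)
  case base
  show ?case
    by (intro exI[of _ "\<lambda>_. 0"]) simp
next
  case (step c y x)
  then obtain t0 c' where t0: "t0 \<in> T" "y = f t0" and x: "x = (\<Sum>t\<in>T. scl (c' t) (f t))"
    by blast
  have "scl c y + x = (\<Sum>t\<in>T. scl (if t = t0 then c else 0) (f t)) + x"
    using t0 assms(1) by (auto simp: sum.remove intro!: sum.neutral)
  also have "\<dots> = (\<Sum>t\<in>T. scl ((if t = t0 then c else 0) + c' t) (f t))"
    by (simp add: x scl_add_left sum.distrib)
  finally show ?case
    by (auto intro!: exI[of _ "\<lambda>t. (if t = t0 then c else 0) + c' t"])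
qed

lemma poly_mapping_sum_single:
  "(p :: 'a \<Rightarrow>\<^sub>0 'b::comm_monoid_add)
    = (\<Sum>m\<in>Poly_Mapping.keys p. Poly_Mapping.single m (Poly_Mapping.lookup p m))"
proof (rule poly_mapping_eqI)
  fix k
  let ?s = "\<Sum>m\<in>Poly_Mapping.keys p. Poly_Mapping.single m (Poly_Mapping.lookup p m)"
  have "Poly_Mapping.lookup ?s k
      = (\<Sum>m\<in>Poly_Mapping.keys p. if m = k then Poly_Mapping.lookup p m else 0)"
    unfolding lookup_sum by (rule sum.cong) (auto simp: lookup_single)
  also have "\<dots> = Poly_Mapping.lookup p k"
    by (simp add: in_keys_iff)
  finally show "Poly_Mapping.lookup p k = Poly_Mapping.lookup ?s k"
    by simp
qed

lemma monomial_eq_prod_Var: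
  "Poly_Mapping.single m 1
    = (\<Prod>x\<in>Poly_Mapping.keys m. Var x ^ Poly_Mapping.lookup m x :: 'k::comm_ring_1 mpoly)"
proof -
  have single_power: "Poly_Mapping.single (Poly_Mapping.single x e) 1 = (Var x ^ e :: 'k mpoly)"
    for x e
  proof (induction e)
    case (Suc e)
    have "Poly_Mapping.single (Poly_Mapping.single x (Suc e)) (1::'k)
        = Poly_Mapping.single (Poly_Mapping.single x e) 1
          * Poly_Mapping.single (Poly_Mapping.single x 1) 1"
      by (simp add: mult_single flip: single_add)
    with Suc show ?case
      by (simp add: Var_def mult.commute)
  qed simp
  have mult_single_monomial:
    "Poly_Mapping.single (ma + mb) 1
      = (Poly_Mapping.single ma 1 * Poly_Mapping.single mb 1 :: 'k mpoly)" for ma mb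
    by (simp add: mult_single)
  have "Poly_Mapping.single m 1
      = (Poly_Mapping.single
          (\<Sum>x\<in>Poly_Mapping.keys m. Poly_Mapping.single x (Poly_Mapping.lookup m x)) 1 :: 'k mpoly)"
    using poly_mapping_sum_single[of m] by simp
  also have "\<dots> = (\<Prod>x\<in>Poly_Mapping.keys m.
      Poly_Mapping.single (Poly_Mapping.single x (Poly_Mapping.lookup m x)) 1)"
    by (induction rule: finite_induct[OF finite_keys]) (simp_all add: mult_single_monomial)
  finally show ?thesis
    by (simp add: single_power)
qed

lemma finite_vars [simp]: "finite (vars p)"
  by (simp add: vars_def)

lemma mpoly_induct_vars [consumes 1, case_names Const Var add mult]:
  fixes p :: "'k::comm_ring_1 mpoly"
  assumes "vars p \<subseteq> X"
    and Const: "\<And>c. P (Const c)"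
    and Var: "\<And>x. x \<in> X \<Longrightarrow> P (Var x)"
    and add: "\<And>p q. P p \<Longrightarrow> P q \<Longrightarrow> P (p + q)"
    and mult: "\<And>p q. P p \<Longrightarrow> P q \<Longrightarrow> P (p * q)"
  shows "P p"
proof -
  have P_sum: "P (sum f S)" if "\<And>s. s \<in> S \<Longrightarrow> P (f s)" for f :: "'a \<Rightarrow> 'k mpoly" and S
    using that Const[of 0] by (induction S rule: infinite_finite_induct) (simp_all add: add)
  have P_prod: "P (prod f S)" if "\<And>s. s \<in> S \<Longrightarrow> P (f s)" for f :: "'a \<Rightarrow> 'k mpoly" and S
    using that Const[of 1] by (induction S rule: infinite_finite_induct) (simp_all add: mult)
  have P_term: "P (Poly_Mapping.single m (Poly_Mapping.lookup p m))"
    if "m \<in> Poly_Mapping.keys p" for m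
  proof -
    have "Poly_Mapping.keys m \<subseteq> X"
      using that assms(1) by (auto simp: vars_def)
    moreover have "P (Var x ^ e)" if "x \<in> X" for x e
      using Const[of 1] that by (induction e) (simp_all add: mult Var)
    ultimately have "P (\<Prod>x\<in>Poly_Mapping.keys m. Var x ^ Poly_Mapping.lookup m x)"
      by (intro P_prod) auto
    then have "P (Const (Poly_Mapping.lookup p m) * Poly_Mapping.single m 1)"
      by (simp add: monomial_eq_prod_Var mult Const)
    then show ?thesis
      by (simp add: Const_def mult_single)
  qed
  show ?thesis
    by (subst poly_mapping_sum_single) (auto intro: P_sum P_term)
qed

lemma mpoly_induct [case_names Const Var add mult]:
  fixes p :: "'k::comm_ring_1 mpoly"
  assumes "\<And>c. P (Const c)" and "\<And>x. P (Var x)"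
    and "\<And>p q. P p \<Longrightarrow> P q \<Longrightarrow> P (p + q)" and "\<And>p q. P p \<Longrightarrow> P q \<Longrightarrow> P (p * q)"
  shows "P p"
  using mpoly_induct_vars[of p UNIV P] assms by blast

lemma vars_add: "vars (p + q) \<subseteq> vars p \<union> vars q"
  using keys_add[of p q] by (auto simp: vars_def)

lemma vars_mult: "vars (p * q) \<subseteq> vars p \<union> vars q"
proof
  fix x assume "x \<in> vars (p * q)"
  then obtain m :: "var \<Rightarrow>\<^sub>0 nat" where m: "m \<in> Poly_Mapping.keys (p * q)" "x \<in> Poly_Mapping.keys m"
    by (auto simp: vars_def)
  then obtain ma mb where "m = ma + mb" "ma \<in> Poly_Mapping.keys p" "mb \<in> Poly_Mapping.keys q"
    using keys_mult[of p q] by blast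
  then show "x \<in> vars p \<union> vars q"
    using m(2) by (auto simp: vars_def in_keys_iff lookup_add)
qed

lemma vars_one [simp]: "vars 1 = {}"
  using vars_def[of 1] by (simp add: one_poly_mapping.rep_eq)

lemma vars_zero [simp]: "vars 0 = {}"
  and vars_Const [simp]: "vars (Const c) = {}"
  and vars_Var [simp]: "vars (Var x :: 'k::comm_ring_1 mpoly) = {x}"
  and vars_uminus [simp]: "vars (- p) = vars p"
  by (simp_all add: vars_def Const_def Var_def)

section \<open>Derivations of the polynomial ring\<close>

lemma pdv_superset:
  fixes p :: "'k::comm_ring_1 mpoly"
  assumes "finite K" "Poly_Mapping.keys p \<subseteq> K"
  shows "pdv x p = (\<Sum>m\<in>K. Poly_Mapping.single (m - Poly_Mapping.single x 1)
                     (of_nat (Poly_Mapping.lookup m x) * Poly_Mapping.lookup p m))"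
  unfolding pdv_def by (rule sum.mono_neutral_left) (auto simp: assms in_keys_iff)

lemma pdv_add: "pdv x (p + q) = pdv x p + (pdv x q :: 'k::comm_ring_1 mpoly)"
proof -
  let ?K = "Poly_Mapping.keys p \<union> Poly_Mapping.keys q"
  have "pdv x (p + q) = (\<Sum>m\<in>?K. Poly_Mapping.single (m - Poly_Mapping.single x 1)
                          (of_nat (Poly_Mapping.lookup m x) * Poly_Mapping.lookup (p + q) m))"
    using keys_add[of p q] by (intro pdv_superset) auto
  also have "\<dots> = pdv x p + pdv x q"
    by (simp add: pdv_superset[of ?K] lookup_add distrib_left single_add sum.distrib)
  finally show ?thesis .
qed

lemma pdv_zero [simp]: "pdv x 0 = 0"
  by (simp add: pdv_def)

lemma pdv_sum: "pdv x (sum f S) = (\<Sum>s\<in>S. pdv x (f s))"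
  by (induction S rule: infinite_finite_induct) (simp_all add: pdv_add)

lemma pdv_single:
  "pdv x (Poly_Mapping.single m c :: 'k::comm_ring_1 mpoly)
     = Poly_Mapping.single (m - Poly_Mapping.single x 1) (of_nat (Poly_Mapping.lookup m x) * c)"
  by (cases "c = 0") (simp_all add: pdv_def)

lemma pdv_mult_single:
  "pdv x (Poly_Mapping.single m a * Poly_Mapping.single m' b :: 'k::comm_ring_1 mpoly)
   = Poly_Mapping.single m a * pdv x (Poly_Mapping.single m' b)
     + pdv x (Poly_Mapping.single m a) * Poly_Mapping.single m' b"
proof -
  let ?dx = "Poly_Mapping.single x (1::nat)"
  have shift:
    "Poly_Mapping.single (ma + (mb - ?dx)) c = (Poly_Mapping.single (ma + mb - ?dx) c :: 'k mpoly)"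
    if "Poly_Mapping.lookup mb x = 0 \<longrightarrow> c = 0" for ma mb c
  proof (cases "Poly_Mapping.lookup mb x = 0")
    case False
    have "ma + (mb - ?dx) = ma + mb - ?dx"
      using False
      by (intro poly_mapping_eqI) (auto simp: lookup_add lookup_minus lookup_single when_def)
    then show ?thesis by simp
  qed (use that in simp)
  show ?thesis
    using shift[where ma = m and mb = m' and c = "of_nat (Poly_Mapping.lookup m' x) * (a * b)"]
      shift[where ma = m' and mb = m and c = "of_nat (Poly_Mapping.lookup m x) * (a * b)"]
    by (simp add: mult_single pdv_single add.commute[of "m - ?dx"] lookup_add algebra_simps
        flip: single_add)
qed

lemma pdv_mult: "pdv x (p * q) = p * pdv x q + pdv x p * (q :: 'k::comm_ring_1 mpoly)"
proof -
  let ?t = "\<lambda>p m. Poly_Mapping.single m (Poly_Mapping.lookup p m) :: 'k mpoly"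
  have "pdv x (p * q)
      = pdv x ((\<Sum>m\<in>Poly_Mapping.keys p. ?t p m) * (\<Sum>m'\<in>Poly_Mapping.keys q. ?t q m'))"
    by (simp flip: poly_mapping_sum_single)
  also have "\<dots> = (\<Sum>m\<in>Poly_Mapping.keys p. ?t p m) * pdv x (\<Sum>m'\<in>Poly_Mapping.keys q. ?t q m')
      + pdv x (\<Sum>m\<in>Poly_Mapping.keys p. ?t p m) * (\<Sum>m'\<in>Poly_Mapping.keys q. ?t q m')"
    by (simp add: sum_distrib_left sum_distrib_right pdv_sum pdv_mult_single sum.distrib)
  also have "\<dots> = p * pdv x q + pdv x p * q"
    by (simp flip: poly_mapping_sum_single)
  finally show ?thesis .
qed

lemma pdv_Var: "pdv x (Var y :: 'k::comm_ring_1 mpoly) = (if x = y then 1 else 0)"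
  by (auto simp: Var_def pdv_single lookup_single)

lemma pdv_not_in_vars: "x \<notin> vars p \<Longrightarrow> pdv x p = 0"
  unfolding pdv_def by (rule sum.neutral) (auto simp: vars_def in_keys_iff)

lemma der_superset:
  assumes "finite S" "vars p \<subseteq> S"
  shows "der g p = (\<Sum>x\<in>S. g x * pdv x p)"
  unfolding der_def by (rule sum.mono_neutral_left) (use assms in \<open>auto simp: pdv_not_in_vars\<close>)

lemma der_Var [simp]: "der g (Var x :: 'k::comm_ring_1 mpoly) = g x"
  by (simp add: der_def pdv_Var)

locale derivation =
  fixes D :: "'k::comm_ring_1 mpoly \<Rightarrow> 'k mpoly"
  assumes add [simp]: "D (p + q) = D p + D q"
    and mult: "D (p * q) = p * D q + D p * q"
    and Const [simp]: "D (Const c) = 0"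
begin

lemma zero [simp]: "D 0 = 0"
  using Const[of 0] by simp

lemma one [simp]: "D 1 = 0"
  using Const[of 1] by simp

lemma uminus [simp]: "D (- p) = - D p"
  using add[of p "- p"] by (simp add: eq_neg_iff_add_eq_0 add.commute)

lemma diff [simp]: "D (p - q) = D p - D q"
  using add[of p "- q"] by simp

lemma scl [simp]: "D (scl c p) = scl c (D p)"
  by (simp add: scl_def mult)

lemma of_nat [simp]: "D (of_nat m) = 0"
  using Const[of "of_nat m"] by (simp add: Const_of_nat)

lemma numeral [simp]: "D (numeral w) = 0"
  using of_nat[of "numeral w"] by simp

lemma sum: "D (sum f S) = (\<Sum>s\<in>S. D (f s))"
  by (induction S rule: infinite_finite_induct) simp_all

lemma power: "D (p ^ e) = of_nat e * p ^ (e - 1) * D p"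
proof (induction e)
  case (Suc e)
  then show ?case
    by (cases e) (simp_all add: mult algebra_simps)
qed simp

lemma funpow_zero [simp]: "(D ^^ e) 0 = 0"
  by (induction e) simp_all

lemma funpow_plus: "(D ^^ e) (p + q) = (D ^^ e) p + (D ^^ e) q"
  by (induction e) simp_all

lemma funpow_uminus: "(D ^^ e) (- p) = - (D ^^ e) p"
  by (induction e) simp_all

lemma funpow_scl: "(D ^^ e) (scl c p) = scl c ((D ^^ e) p)"
  by (induction e) simp_all

lemma funpow_sum: "(D ^^ e) (sum f S) = (\<Sum>s\<in>S. (D ^^ e) (f s))"
  by (induction S rule: infinite_finite_induct) (simp_all add: funpow_plus)

lemma funpow_zero_mono:
  assumes "(D ^^ e) p = 0" "e \<le> e'"
  shows "(D ^^ e') p = 0"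
proof -
  have "(D ^^ e') p = (D ^^ (e' - e)) ((D ^^ e) p)"
    using assms(2) by (metis funpow_add comp_apply le_add_diff_inverse2)
  then show ?thesis
    using assms(1) by simp
qed

end

lemma derivation_der:
  fixes g :: "var \<Rightarrow> 'k::comm_ring_1 mpoly"
  shows "derivation (der g)"
proof
  fix p q :: "'k mpoly"
  let ?S = "vars p \<union> vars q"
  have "der g r = (\<Sum>x\<in>?S. g x * pdv x r)" if "vars r \<subseteq> ?S" for r
    using that by (intro der_superset) auto
  then show "der g (p + q) = der g p + der g q" "der g (p * q) = p * der g q + der g p * q"
    using vars_add[of p q] vars_mult[of p q]
    by (auto simp: pdv_add pdv_mult distrib_left sum.distrib sum_distrib_left sum_distrib_right
        ac_simps)
qed (simp add: der_def)

lemma derivation_eqI: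
  assumes "derivation D" "derivation D'" "\<And>x. D (Var x) = D' (Var x)"
  shows "D p = D' p"
proof -
  interpret D: derivation D by fact
  interpret D': derivation D' by fact
  show ?thesis
    by (induction p rule: mpoly_induct) (simp_all add: assms D.mult D'.mult)
qed

lemma derivation_zero: "derivation (\<lambda>p. 0)"
  by unfold_locales simp_all

lemma derivation_plus:
  assumes "derivation D" "derivation D'"
  shows "derivation (\<lambda>p. D p + D' p)"
proof -
  interpret D: derivation D by fact
  interpret D': derivation D' by fact
  show ?thesis
    by unfold_locales (simp_all add: D.mult D'.mult algebra_simps)
qed

lemma derivation_scl:
  assumes "derivation D"
  shows "derivation (\<lambda>p. scl c (D p))"
proof -
  interpret D: derivation D by fact
  show ?thesis
    by unfold_locales (simp_all add: D.mult scl_add_right scl_mult_left scl_mult_right)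
qed

lemma derivation_uminus: "derivation D \<Longrightarrow> derivation (\<lambda>p. - D p)"
  using derivation_scl[of D "- 1"] by (simp add: scl_minus_left)

lemma derivation_commutator:
  assumes "derivation D" "derivation D'"
  shows "derivation (\<lambda>p. D (D' p) - D' (D p))"
proof -
  interpret D: derivation D by fact
  interpret D': derivation D' by fact
  show ?thesis
    by unfold_locales (simp_all add: D.mult D'.mult algebra_simps)
qed

lemma commutator_eqI:
  assumes "derivation X" "derivation Y" "derivation R"
    and "\<And>x. X (Y (Var x)) = Y (X (Var x)) + R (Var x)"
  shows "X (Y p) = Y (X p) + R p"
  using derivation_eqI[OF derivation_commutator[OF assms(1,2)] assms(3), of p] assms(4)
  by (simp add: algebra_simps)

lemma commutator_eqI_minus:
  assumes "derivation X" "derivation Y" "derivation R"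
    and "\<And>x. X (Y (Var x)) = Y (X (Var x)) - R (Var x)"
  shows "X (Y p) = Y (X p) - R p"
  using commutator_eqI[OF assms(1,2) derivation_uminus[OF assms(3)]] assms(4) by simp

lemma commuting_eqI:
  assumes "derivation X" "derivation Y" "\<And>x. X (Y (Var x)) = Y (X (Var x))"
  shows "X (Y p) = Y (X p)"
  using commutator_eqI[OF assms(1,2) derivation_zero] assms(3) by simp

lemma (in derivation) module_hom: "module_hom scl scl D"
  by (simp add: module_hom_iff SM.module_axioms)

lemma (in derivation) mult_powers:
  "D (q * r ^ e * s ^ i * t ^ j) = D q * r ^ e * s ^ i * t ^ j
     + q * (of_nat e * r ^ (e - 1) * D r) * s ^ i * t ^ j
     + q * r ^ e * (of_nat i * s ^ (i - 1) * D s) * t ^ j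
     + q * r ^ e * s ^ i * (of_nat j * t ^ (j - 1) * D t)"
  by (simp add: mult power algebra_simps)

lemma funpow_commuting:
  assumes "\<And>p. X (Y p) = Y (X p)"
  shows "X ((Y ^^ k) p) = (Y ^^ k) (X p)"
  by (induction k) (simp_all add: assms)

context derivation
begin

lemma commutator_funpow:
  assumes XD: "\<And>p. X (D p) = D (X p) + Z p" and ZD: "\<And>p. Z (D p) = D (Z p)"
  shows "X ((D ^^ Suc k) p) = (D ^^ Suc k) (X p) + scl (of_nat (Suc k)) ((D ^^ k) (Z p))"
proof (induction k)
  case (Suc k)
  have "X ((D ^^ Suc (Suc k)) p) = X (D ((D ^^ Suc k) p))"
    by simp
  also have "\<dots> = D (X ((D ^^ Suc k) p)) + (D ^^ Suc k) (Z p)"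
    by (simp only: XD funpow_commuting[of Z D, OF ZD])
  also have "D (X ((D ^^ Suc k) p))
      = (D ^^ Suc (Suc k)) (X p) + scl (of_nat (Suc k)) ((D ^^ Suc k) (Z p))"
    using Suc by simp
  finally show ?case
    using scl_add_left[of "of_nat (Suc k)" 1 "(D ^^ Suc k) (Z p)"]
    by (simp add: add.assoc del: funpow.simps)
qed (simp add: XD)

lemma eigenvector_funpow:
  assumes XD: "\<And>p. X (D p) = D (X p) + scl e (D p)" and q: "X q = scl c q"
  shows "X ((D ^^ k) q) = scl (c + of_nat k * e) ((D ^^ k) q)"
proof (induction k)
  case (Suc k)
  then show ?case
    by (simp add: XD flip: scl_add_left) (simp add: algebra_simps)
qed (simp add: q)

lemma sl2_lowering:
  assumes XD: "\<And>p. X (D p) = D (X p) + H p" and HD: "\<And>p. H (D p) = D (H p) + scl (- 2) (D p)"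
    and y: "X y = 0" and Hy: "H y = scl c y"
  shows "X ((D ^^ Suc k) y) = scl (of_nat (Suc k) * (c - of_nat k)) ((D ^^ k) y)"
proof (induction k)
  case (Suc k)
  have H: "H ((D ^^ Suc k) y) = scl (c + of_nat (Suc k) * (- 2)) ((D ^^ Suc k) y)"
    by (rule eigenvector_funpow[where X = H, OF HD Hy])
  have "X ((D ^^ Suc (Suc k)) y) = X (D ((D ^^ Suc k) y))"
    by simp
  also have "\<dots> = D (X ((D ^^ Suc k) y)) + H ((D ^^ Suc k) y)"
    by (rule XD)
  also have "\<dots> = scl (of_nat (Suc k) * (c - of_nat k)) ((D ^^ Suc k) y)
      + scl (c + of_nat (Suc k) * (- 2)) ((D ^^ Suc k) y)"
    by (simp only: Suc.IH H scl) simp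
  also have "\<dots> = scl (of_nat (Suc (Suc k)) * (c - of_nat (Suc k))) ((D ^^ Suc k) y)"
    by (simp only: scl_add_left[symmetric]) (simp add: algebra_simps)
  finally show ?case .
qed (simp add: XD y Hy)

end

context derivation
begin

lemma funpow_mult_eq_0:
  "(D ^^ k) p = 0 \<Longrightarrow> (D ^^ l) q = 0 \<Longrightarrow> (D ^^ (k + l)) (p * q) = 0"
proof (induction "k + l" arbitrary: k l p q)
  case (Suc m)
  show ?case
  proof (cases "k = 0 \<or> l = 0")
    case False
    then obtain k' l' where kl: "k = Suc k'" "l = Suc l'"
      by (meson not0_implies_Suc)
    have "(D ^^ m) (p * D q) = 0"
      using Suc.hyps(1)[of "Suc k'" l' p "D q"] Suc.hyps(2) Suc.prems kl by (simp add: funpow_swap1)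
    moreover have "(D ^^ m) (D p * q) = 0"
      using Suc.hyps(1)[of k' "Suc l'" "D p" q] Suc.hyps(2) Suc.prems kl by (simp add: funpow_swap1)
    ultimately have "(D ^^ m) (D (p * q)) = 0"
      by (simp add: mult funpow_plus)
    then show ?thesis
      by (simp add: funpow_swap1 flip: Suc.hyps(2))
  qed (use Suc.prems in auto)
qed simp

lemma locally_nilpotentI:
  assumes "\<And>x. \<exists>k. (D ^^ k) (Var x) = 0"
  shows "\<exists>k. (D ^^ k) p = 0"
proof (induction p rule: mpoly_induct)
  case (Const c)
  show ?case
    by (rule exI[of _ 1]) simp
next
  case (add p q)
  then obtain k l where "(D ^^ k) p = 0" "(D ^^ l) q = 0"
    by blast
  then show ?case
    by (intro exI[of _ "k + l"]) (simp add: funpow_plus funpow_zero_mono)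
next
  case (mult p q)
  then show ?case
    using funpow_mult_eq_0 by blast
qed (rule assms)

lemma funpow_ord:
  assumes "(D ^^ k) p = 0" "p \<noteq> 0"
  shows "(D ^^ ord D p) p \<noteq> 0" "(D ^^ Suc (ord D p)) p = 0"
proof -
  have bound: "s \<le> k" if "(D ^^ s) p \<noteq> 0" for s
    using that funpow_zero_mono[OF assms(1), of s] by (cases "s \<le> k") auto
  have "(D ^^ 0) p \<noteq> 0"
    using assms(2) by simp
  then show "(D ^^ ord D p) p \<noteq> 0"
    unfolding ord_def by (rule GreatestI_nat[where P = "\<lambda>s. (D ^^ s) p \<noteq> 0", OF _ bound])
  show "(D ^^ Suc (ord D p)) p = 0"
    using Greatest_le_nat[where P = "\<lambda>s. (D ^^ s) p \<noteq> 0", OF _ bound, of "Suc (ord D p)"]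
    unfolding ord_def by fastforce
qed

end

section \<open>The operators of \<open>sl\<^sub>3\<close>\<close>

interpretation D1: derivation "D1 n" for n unfolding D1_def by (rule derivation_der)
interpretation D2: derivation "D2 n" for n unfolding D2_def by (rule derivation_der)
interpretation D3: derivation "D3 n" for n unfolding D3_def by (rule derivation_der)
interpretation Dh1: derivation "Dh1 n" for n unfolding Dh1_def by (rule derivation_der)
interpretation Dh2: derivation "Dh2 n" for n unfolding Dh2_def by (rule derivation_der)
interpretation Dh3: derivation "Dh3 n" for n unfolding Dh3_def by (rule derivation_der)
interpretation E1: derivation "E1 n" for n unfolding E1_def by (rule derivation_der)
interpretation E2: derivation "E2 n" for n unfolding E2_def by (rule derivation_der)

lemma sl3_ops_Var [simp]:
  "D1 n (Var x) = gD1 n x" "D2 n (Var x) = gD2 n x" "D3 n (Var x) = gD3 n x"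
  "Dh1 n (Var x) = gH1 n x" "Dh2 n (Var x) = gH2 n x" "Dh3 n (Var x) = gH3 n x"
  "E1 n (Var x) = gE1 n x" "E2 n (Var x) = gE2 n x"
  by (simp_all add: D1_def D2_def D3_def Dh1_def Dh2_def Dh3_def E1_def E2_def)

lemmas sl3_derivations [simp] =
  D1.derivation_axioms D2.derivation_axioms D3.derivation_axioms Dh1.derivation_axioms
  Dh2.derivation_axioms Dh3.derivation_axioms E1.derivation_axioms E2.derivation_axioms

lemmas sl3_ops_mult = D1.mult D2.mult D3.mult Dh1.mult Dh2.mult Dh3.mult E1.mult E2.mult

lemmas sl3_ops_generator_simps = aa_def Suc_le_eq scl_def Const_simps sl3_ops_mult

lemma derivation_sl3_ops: "D \<in> sl3_ops n \<Longrightarrow> derivation D"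
  by (auto simp: sl3_ops_def)

lemma Dh3_Dh2_comm: "Dh3 n (Dh2 n p) = Dh2 n (Dh3 n p)"
  by (rule commuting_eqI[OF Dh3.derivation_axioms Dh2.derivation_axioms])
    (case_tac x; auto simp: sl3_ops_generator_simps algebra_simps)

lemma Dh1_Dh2_comm: "Dh1 n (Dh2 n p) = Dh2 n (Dh1 n p) - Dh3 n p"
  by (rule commutator_eqI_minus[OF Dh1.derivation_axioms Dh2.derivation_axioms
        Dh3.derivation_axioms])
    (case_tac x; auto simp: sl3_ops_generator_simps algebra_simps)

lemma Dh1_Dh3_comm: "Dh1 n (Dh3 n p) = Dh3 n (Dh1 n p)"
  by (rule commuting_eqI[OF Dh1.derivation_axioms Dh3.derivation_axioms])
    (case_tac x; auto simp: sl3_ops_generator_simps algebra_simps)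

lemma D1_Dh2_comm: "D1 n (Dh2 n p) = Dh2 n (D1 n p)"
  by (rule commuting_eqI[OF D1.derivation_axioms Dh2.derivation_axioms])
    (case_tac x; auto simp: sl3_ops_generator_simps algebra_simps)

lemma D1_Dh3_comm: "D1 n (Dh3 n p) = Dh3 n (D1 n p) - Dh2 n p"
  by (rule commutator_eqI_minus[OF D1.derivation_axioms Dh3.derivation_axioms
        Dh2.derivation_axioms])
    (case_tac x; auto simp: sl3_ops_generator_simps algebra_simps)

lemma D2_Dh3_comm: "D2 n (Dh3 n p) = Dh3 n (D2 n p) + Dh1 n p"
  by (rule commutator_eqI[OF D2.derivation_axioms Dh3.derivation_axioms Dh1.derivation_axioms])
    (case_tac x; auto simp: sl3_ops_generator_simps algebra_simps)

lemma D2_Dh2_comm: "D2 n (Dh2 n p) = Dh2 n (D2 n p) + E2 n p"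
  by (rule commutator_eqI[OF D2.derivation_axioms Dh2.derivation_axioms E2.derivation_axioms])
    (case_tac x; auto simp: sl3_ops_generator_simps algebra_simps)

lemma D3_Dh3_comm: "D3 n (Dh3 n p) = Dh3 n (D3 n p) + (E1 n p + E2 n p)"
  by (rule commutator_eqI[OF D3.derivation_axioms Dh3.derivation_axioms
        derivation_plus[OF E1.derivation_axioms E2.derivation_axioms]])
    (case_tac x; auto simp: sl3_ops_generator_simps algebra_simps)

lemma D3_Dh2_comm: "D3 n (Dh2 n p) = Dh2 n (D3 n p) + D1 n p"
  by (rule commutator_eqI[OF D3.derivation_axioms Dh2.derivation_axioms D1.derivation_axioms])
    (case_tac x; auto simp: sl3_ops_generator_simps algebra_simps)

lemma D1_Dh1_comm: "D1 n (Dh1 n p) = Dh1 n (D1 n p) + E1 n p"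
  by (rule commutator_eqI[OF D1.derivation_axioms Dh1.derivation_axioms E1.derivation_axioms])
    (case_tac x; auto simp: sl3_ops_generator_simps algebra_simps)

lemma Dh1_D3_comm: "Dh1 n (D3 n p) = D3 n (Dh1 n p) + D2 n p"
  by (rule commutator_eqI[OF Dh1.derivation_axioms D3.derivation_axioms D2.derivation_axioms])
    (case_tac x; auto simp: sl3_ops_generator_simps algebra_simps)

lemma E1_Dh2_comm: "E1 n (Dh2 n p) = Dh2 n (E1 n p) + Dh2 n p"
  by (rule commutator_eqI[OF E1.derivation_axioms Dh2.derivation_axioms Dh2.derivation_axioms])
    (case_tac x; auto simp: sl3_ops_generator_simps algebra_simps)

lemma E1_Dh3_comm: "E1 n (Dh3 n p) = Dh3 n (E1 n p) - Dh3 n p"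
  by (rule commutator_eqI_minus[OF E1.derivation_axioms Dh3.derivation_axioms
        Dh3.derivation_axioms])
    (case_tac x; auto simp: sl3_ops_generator_simps algebra_simps)

lemma E2_Dh2_comm: "E2 n (Dh2 n p) = Dh2 n (E2 n p) + scl (- 2) (Dh2 n p)"
  by (rule commutator_eqI[OF E2.derivation_axioms Dh2.derivation_axioms
        derivation_scl[OF Dh2.derivation_axioms]])
    (case_tac x; auto simp: sl3_ops_generator_simps algebra_simps)

lemma E2_Dh3_comm: "E2 n (Dh3 n p) = Dh3 n (E2 n p) - Dh3 n p"
  by (rule commutator_eqI_minus[OF E2.derivation_axioms Dh3.derivation_axioms
        Dh3.derivation_axioms])
    (case_tac x; auto simp: sl3_ops_generator_simps algebra_simps)

lemma KA_add: "p \<in> KA n \<Longrightarrow> q \<in> KA n \<Longrightarrow> p + q \<in> KA n"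
  using vars_add[of p q] by (auto simp: KA_def)

lemma KA_mult: "p \<in> KA n \<Longrightarrow> q \<in> KA n \<Longrightarrow> p * q \<in> KA n"
  using vars_mult[of p q] by (auto simp: KA_def)

lemma KA_uminus: "p \<in> KA n \<Longrightarrow> - p \<in> KA n"
  by (simp add: KA_def)

lemma KA_diff: "p \<in> KA n \<Longrightarrow> q \<in> KA n \<Longrightarrow> p - q \<in> KA n"
  using KA_add[of p n "- q"] by (simp add: KA_uminus)

lemma Const_in_KA: "Const c \<in> KA n"
  by (simp add: KA_def)

lemma zero_in_KA: "0 \<in> KA n"
  and of_nat_in_KA: "of_nat m \<in> KA n"
  and numeral_in_KA: "numeral w \<in> KA n"
  using Const_in_KA[of 0 n] Const_in_KA[of "of_nat m" n] Const_in_KA[of "numeral w" n]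
  by (simp_all add: Const_simps)

lemma aa_in_KA: "aa n i j \<in> KA n"
  by (auto simp: aa_def KA_def)

lemma subspace_KA: "SM.subspace (KA n)"
  by (auto simp: SM.subspace_def KA_add scl_def KA_mult Const_in_KA zero_in_KA)

lemma sl3_ops_KA:
  assumes "D \<in> sl3_ops n" "p \<in> KA n"
  shows "D p \<in> KA n"
proof -
  interpret D: derivation D
    using assms(1) by (rule derivation_sl3_ops)
  have "vars p \<subseteq> {A i j |i j. i + j \<le> n}"
    using assms(2) by (simp add: KA_def)
  then have "p \<in> KA n \<and> D p \<in> KA n"
  proof (induction p rule: mpoly_induct_vars)
    case (Var x)
    then have "Var x \<in> KA n"
      by (auto simp: KA_def)
    moreover have "D (Var x) \<in> KA n"
      using assms(1) Var by (auto simp: sl3_ops_def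
          intro!: KA_add KA_diff KA_mult aa_in_KA zero_in_KA of_nat_in_KA numeral_in_KA)
    ultimately show ?case ..
  qed (auto simp: Const_in_KA zero_in_KA D.mult intro: KA_add KA_mult)
  then show ?thesis ..
qed

lemma funpow_closed: "(\<And>x. x \<in> W \<Longrightarrow> D x \<in> W) \<Longrightarrow> x \<in> W \<Longrightarrow> (D ^^ k) x \<in> W"
  by (induction k) auto

lemma Dh1_Var_A:
  "Dh1 n (Var (A i j))
    = (if Suc (i + j) \<le> n then scl (of_nat (n - i - j)) (Var (A (Suc i) j)) else 0)"
  by (simp add: aa_def scl_def Const_simps)

lemma Dh2_Var_A:
  "Dh2 n (Var (A i j))
    = (if 1 \<le> i \<and> i + j \<le> n then scl (of_nat i) (Var (A (i - 1) (Suc j))) else 0)"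
  by (simp add: aa_def scl_def Const_simps)

lemma Dh1_funpow_Var_A: "n - i \<le> k \<Longrightarrow> (Dh1 n ^^ Suc k) (Var (A i j) :: 'k::comm_ring_1 mpoly) = 0"
proof (induction k arbitrary: i)
  case (Suc k)
  have "(Dh1 n ^^ Suc (Suc k)) (Var (A i j) :: 'k mpoly) = (Dh1 n ^^ Suc k) (Dh1 n (Var (A i j)))"
    by (simp only: funpow_Suc_right comp_apply)
  also have "\<dots> = 0"
  proof (cases "Suc (i + j) \<le> n")
    case True
    have "(Dh1 n ^^ Suc k) (Var (A (Suc i) j) :: 'k mpoly) = 0"
      by (rule Suc.IH) (use Suc.prems in arith)
    with True show ?thesis
      by (simp add: Dh1_Var_A Dh1.funpow_scl del: sl3_ops_Var funpow.simps)
  qed (simp add: Dh1_Var_A del: sl3_ops_Var funpow.simps)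
  finally show ?case .
qed (auto simp: aa_def)

lemma Dh2_funpow_Var_A: "i \<le> k \<Longrightarrow> (Dh2 n ^^ Suc k) (Var (A i j) :: 'k::comm_ring_1 mpoly) = 0"
proof (induction k arbitrary: i j)
  case (Suc k)
  have "(Dh2 n ^^ Suc (Suc k)) (Var (A i j) :: 'k mpoly) = (Dh2 n ^^ Suc k) (Dh2 n (Var (A i j)))"
    by (simp only: funpow_Suc_right comp_apply)
  also have "\<dots> = 0"
  proof (cases "1 \<le> i \<and> i + j \<le> n")
    case True
    have "(Dh2 n ^^ Suc k) (Var (A (i - 1) (Suc j)) :: 'k mpoly) = 0"
      by (rule Suc.IH) (use Suc.prems in arith)
    with True show ?thesis
      by (simp add: Dh2_Var_A Dh2.funpow_scl del: sl3_ops_Var funpow.simps)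
  qed (auto simp: Dh2_Var_A simp del: sl3_ops_Var funpow.simps)
  finally show ?case .
qed (auto simp: aa_def)

lemma Dh1_locally_nilpotent: "\<exists>k. (Dh1 n ^^ k) p = 0"
proof (rule Dh1.locally_nilpotentI)
  show "\<exists>k. (Dh1 n ^^ k) (Var x) = 0" for x
  proof (cases x)
    case (A i j)
    then show ?thesis
      by (metis Dh1_funpow_Var_A diff_le_self)
  next
    case (U m)
    then show ?thesis
      by (intro exI[of _ 2]) (simp add: numeral_2_eq_2)
  qed
qed

lemma Dh2_locally_nilpotent: "\<exists>k. (Dh2 n ^^ k) p = 0"
proof (rule Dh2.locally_nilpotentI)
  show "\<exists>k. (Dh2 n ^^ k) (Var x) = 0" for x
  proof (cases x)
    case (A i j)
    then show ?thesis
      by (metis Dh2_funpow_Var_A order_refl)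
  next
    case (U m)
    then show ?thesis
      by (intro exI[of _ 2]) (simp add: numeral_2_eq_2)
  qed
qed

section \<open>Degree in the variables \<open>u\<close>\<close>

lemma KAU_add: "p \<in> KAU n \<Longrightarrow> q \<in> KAU n \<Longrightarrow> p + q \<in> KAU n"
  using vars_add[of p q] by (auto simp: KAU_def)

lemma KAU_mult: "p \<in> KAU n \<Longrightarrow> q \<in> KAU n \<Longrightarrow> p * q \<in> KAU n"
  using vars_mult[of p q] by (auto simp: KAU_def)

lemma KAU_scl: "p \<in> KAU n \<Longrightarrow> scl c p \<in> KAU n"
  unfolding scl_def by (rule KAU_mult) (simp_all add: KAU_def)

lemma zero_in_KAU: "0 \<in> KAU n"
  and one_in_KAU: "1 \<in> KAU n"
  by (simp_all add: KAU_def)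

lemma KAU_power: "p \<in> KAU n \<Longrightarrow> p ^ k \<in> KAU n"
  by (induction k) (simp_all add: KAU_mult one_in_KAU)

lemma KAU_sum: "(\<And>x. x \<in> S \<Longrightarrow> f x \<in> KAU n) \<Longrightarrow> sum f S \<in> KAU n"
  by (induction S rule: infinite_finite_induct) (simp_all add: KAU_add zero_in_KAU)

lemma KA_subset_KAU: "KA n \<subseteq> KAU n"
  by (auto simp: KA_def KAU_def)

lemma Var_U_in_KAU: "k \<in> {1, 2, 3} \<Longrightarrow> Var (U k) \<in> KAU n"
  by (auto simp: KAU_def)

lemma udeg_superset:
  assumes "finite K" "Poly_Mapping.keys m \<subseteq> K"
  shows "udeg m = (\<Sum>x\<in>K. case x of U _ \<Rightarrow> Poly_Mapping.lookup m x | A _ _ \<Rightarrow> 0)"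
  unfolding udeg_def by (rule sum.mono_neutral_left) (auto simp: assms in_keys_iff split: var.split)

lemma udeg_add: "udeg (m + m') = udeg m + udeg m'"
proof -
  let ?K = "Poly_Mapping.keys m \<union> Poly_Mapping.keys m'"
  have "udeg (m + m') = (\<Sum>x\<in>?K. case x of U _ \<Rightarrow> Poly_Mapping.lookup (m + m') x | A _ _ \<Rightarrow> 0)"
    by (rule udeg_superset) (auto simp: in_keys_iff lookup_add)
  also have "\<dots> = (\<Sum>x\<in>?K. (case x of U _ \<Rightarrow> Poly_Mapping.lookup m x | A _ _ \<Rightarrow> 0)
      + (case x of U _ \<Rightarrow> Poly_Mapping.lookup m' x | A _ _ \<Rightarrow> 0))"
    by (rule sum.cong) (auto simp: lookup_add split: var.split)
  also have "\<dots> = udeg m + udeg m'"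
    by (simp add: sum.distrib udeg_superset[of ?K])
  finally show ?thesis .
qed

definition u_homogeneous :: "nat \<Rightarrow> 'k::comm_ring_1 mpoly \<Rightarrow> bool" where
  "u_homogeneous k p \<longleftrightarrow> (\<forall>m\<in>Poly_Mapping.keys p. udeg m = k)"

lemma u_homogeneous_add: "u_homogeneous k p \<Longrightarrow> u_homogeneous k q \<Longrightarrow> u_homogeneous k (p + q)"
  using keys_add[of p q] by (auto simp: u_homogeneous_def)

lemma u_homogeneous_zero: "u_homogeneous k 0"
  by (simp add: u_homogeneous_def)

lemma u_homogeneous_sum: "(\<And>x. x \<in> S \<Longrightarrow> u_homogeneous k (f x)) \<Longrightarrow> u_homogeneous k (sum f S)"
  by (induction S rule: infinite_finite_induct) (simp_all add: u_homogeneous_add u_homogeneous_zero)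

lemma u_homogeneous_mult:
  "u_homogeneous k p \<Longrightarrow> u_homogeneous k' q \<Longrightarrow> u_homogeneous (k + k') (p * q)"
  using keys_mult[of p q] by (auto simp: u_homogeneous_def udeg_add)

lemma u_homogeneous_Const: "u_homogeneous 0 (Const c)"
  by (simp add: u_homogeneous_def Const_def udeg_def)

lemma u_homogeneous_scl: "u_homogeneous k p \<Longrightarrow> u_homogeneous k (scl c p)"
  using u_homogeneous_mult[OF u_homogeneous_Const] by (simp add: scl_def)

lemma u_homogeneous_power: "u_homogeneous k p \<Longrightarrow> u_homogeneous (k * e) (p ^ e)"
  using u_homogeneous_Const[of 1] by (induction e) (auto dest: u_homogeneous_mult)

lemma u_homogeneous_Var_U: "u_homogeneous 1 (Var (U k))"
  by (simp add: u_homogeneous_def Var_def udeg_def)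

lemma u_homogeneous_KA: "p \<in> KA n \<Longrightarrow> u_homogeneous 0 p"
  unfolding u_homogeneous_def udeg_def KA_def vars_def
  by (auto intro!: sum.neutral split: var.split)

definition casimir_coeff :: "nat \<Rightarrow> nat \<Rightarrow> 'k::field_char_0" where
  "casimir_coeff i j = (-1) ^ (i + j) / (fact i * fact j)"

lemma casimir_coeff_Suc_left: "casimir_coeff i j = - (casimir_coeff (Suc i) j * of_nat (Suc i))"
  and casimir_coeff_Suc_right: "casimir_coeff i j = - (casimir_coeff i (Suc j) * of_nat (Suc j))"
  by (simp_all add: casimir_coeff_def divide_simps del: of_nat_Suc)

section \<open>The module generated by a highest weight vector\<close>

locale highest_weight_vector =
  fixes n d :: nat and a :: "'k::field_char_0 mpoly"
  assumes nonzero: "a \<noteq> 0" and in_KA: "a \<in> KA n"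
    and D1_a: "D1 n a = 0" and D2_a: "D2 n a = 0" and D3_a: "D3 n a = 0"
    and Dh1_a: "Dh1 n a = 0"
    and E1_a: "E1 n a = 0" and E2_a: "E2 n a = scl (of_nat d) a"
    and Dh2_power_a: "(Dh2 n ^^ Suc d) a = 0"
begin

definition v :: "nat \<Rightarrow> nat \<Rightarrow> 'k mpoly" where
  "v i j = (Dh2 n ^^ j) ((Dh3 n ^^ i) a)"

lemma v_0_0: "v 0 0 = a"
  by (simp add: v_def)

lemma Dh2_v: "Dh2 n (v i j) = v i (Suc j)"
  by (simp add: v_def)

lemma Dh3_v: "Dh3 n (v i j) = v (Suc i) j"
  by (simp add: v_def funpow_commuting[of "Dh3 n" "Dh2 n", OF Dh3_Dh2_comm])

lemma Dh1_Dh3_power_a: "Dh1 n ((Dh3 n ^^ i) a) = 0"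
  by (simp add: funpow_commuting[of "Dh1 n" "Dh3 n", OF Dh1_Dh3_comm] Dh1_a del: funpow.simps)

lemma D1_Dh3_power_a: "D1 n ((Dh3 n ^^ Suc i) a) = scl (- of_nat (Suc i)) (Dh2 n ((Dh3 n ^^ i) a))"
proof -
  have "D1 n ((Dh3 n ^^ Suc i) a)
      = (Dh3 n ^^ Suc i) (D1 n a) + scl (of_nat (Suc i)) ((Dh3 n ^^ i) (- Dh2 n a))"
    by (rule Dh3.commutator_funpow) (simp_all add: D1_Dh3_comm Dh3_Dh2_comm)
  then show ?thesis
    by (simp add: D1_a Dh3.funpow_uminus scl_def Const_simps algebra_simps
        funpow_commuting[of "Dh2 n" "Dh3 n", OF Dh3_Dh2_comm[symmetric], symmetric]
        del: funpow.simps)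
qed

lemma D2_Dh3_power_a: "D2 n ((Dh3 n ^^ i) a) = 0"
proof (cases i)
  case (Suc i')
  have "D2 n ((Dh3 n ^^ Suc i') a)
      = (Dh3 n ^^ Suc i') (D2 n a) + scl (of_nat (Suc i')) ((Dh3 n ^^ i') (Dh1 n a))"
    by (rule Dh3.commutator_funpow) (simp_all add: D2_Dh3_comm Dh1_Dh3_comm)
  then show ?thesis
    using Suc by (simp add: D2_a Dh1_a del: funpow.simps)
qed (simp add: D2_a)

lemma E1_Dh3_power_a: "E1 n ((Dh3 n ^^ i) a) = scl (- of_nat i) ((Dh3 n ^^ i) a)"
  using Dh3.eigenvector_funpow[where n = n and X = "E1 n" and e = "- 1" and c = 0, of a i]
  by (simp add: E1_Dh3_comm E1_a scl_minus_left)

lemma E2_Dh3_power_a: "E2 n ((Dh3 n ^^ i) a) = scl (of_nat d - of_nat i) ((Dh3 n ^^ i) a)"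
  using Dh3.eigenvector_funpow[where n = n and X = "E2 n" and e = "- 1" and c = "of_nat d", of a i]
  by (simp add: E2_Dh3_comm E2_a scl_minus_left)

lemma D3_Dh3_power_a:
  "D3 n ((Dh3 n ^^ Suc i) a) = scl (of_nat (Suc i) * (of_nat d - of_nat i)) ((Dh3 n ^^ i) a)"
  by (rule Dh3.sl2_lowering[where H = "\<lambda>p. E1 n p + E2 n p"])
    (simp_all add: D3_Dh3_comm E1_Dh3_comm E2_Dh3_comm D3_a E1_a E2_a scl_def Const_simps)

lemma Dh1_v: "Dh1 n (v i 0) = 0" "Dh1 n (v i (Suc j)) = scl (- of_nat (Suc j)) (v (Suc i) j)"
proof -
  have "Dh1 n (v i (Suc j))
      = (Dh2 n ^^ Suc j) (Dh1 n ((Dh3 n ^^ i) a))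
        + scl (of_nat (Suc j)) ((Dh2 n ^^ j) (- Dh3 n ((Dh3 n ^^ i) a)))"
    unfolding v_def by (rule Dh2.commutator_funpow) (simp_all add: Dh1_Dh2_comm Dh3_Dh2_comm)
  then show "Dh1 n (v i (Suc j)) = scl (- of_nat (Suc j)) (v (Suc i) j)"
    by (simp add: Dh1_Dh3_power_a Dh2.funpow_uminus scl_def Const_simps algebra_simps v_def
        funpow_swap1 funpow_Suc_right del: funpow.simps)
qed (simp add: v_def Dh1_Dh3_power_a del: funpow.simps)

lemma D1_v: "D1 n (v 0 j) = 0" "D1 n (v (Suc i) j) = scl (- of_nat (Suc i)) (v i (Suc j))"
  by (simp_all add: v_def funpow_commuting[of "D1 n" "Dh2 n", OF D1_Dh2_comm] D1_a D1_Dh3_power_a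
      Dh2.funpow_scl del: funpow.simps) (simp add: funpow_swap1)

lemma D2_v:
  "D2 n (v i 0) = 0"
  "D2 n (v i (Suc j)) = scl (of_nat (Suc j) * (of_nat d - of_nat i - of_nat j)) (v i j)"
proof -
  show "D2 n (v i (Suc j)) = scl (of_nat (Suc j) * (of_nat d - of_nat i - of_nat j)) (v i j)"
    unfolding v_def diff_diff_eq[symmetric]
    by (rule Dh2.sl2_lowering[where H = "E2 n"])
      (simp_all add: D2_Dh2_comm E2_Dh2_comm D2_Dh3_power_a E2_Dh3_power_a)
qed (simp add: v_def D2_Dh3_power_a)

lemma D3_v:
  "D3 n (v 0 j) = 0"
  "D3 n (v (Suc i) j) = scl (of_nat (Suc i) * (of_nat d - of_nat i - of_nat j)) (v i j)"
proof -
  have D3_v_Suc: "D3 n (v i (Suc j)) = (Dh2 n ^^ Suc j) (D3 n ((Dh3 n ^^ i) a))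
      + scl (of_nat (Suc j)) ((Dh2 n ^^ j) (D1 n ((Dh3 n ^^ i) a)))" for i j
    unfolding v_def by (rule Dh2.commutator_funpow) (simp_all add: D3_Dh2_comm D1_Dh2_comm)
  show "D3 n (v 0 j) = 0"
  proof (cases j)
    case (Suc j')
    then show ?thesis
      using D3_v_Suc[of 0 j'] by (simp add: D3_a D1_a)
  qed (simp add: v_def D3_a)
  show "D3 n (v (Suc i) j) = scl (of_nat (Suc i) * (of_nat d - of_nat i - of_nat j)) (v i j)"
  proof (cases j)
    case (Suc j')
    have "D3 n (v (Suc i) (Suc j'))
        = (Dh2 n ^^ Suc j') (scl (of_nat (Suc i) * (of_nat d - of_nat i)) ((Dh3 n ^^ i) a))
          + scl (of_nat (Suc j')) ((Dh2 n ^^ j') (scl (- of_nat (Suc i)) (Dh2 n ((Dh3 n ^^ i) a))))"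
      by (simp only: D3_v_Suc D3_Dh3_power_a D1_Dh3_power_a)
    also have "\<dots> = scl (of_nat (Suc i) * (of_nat d - of_nat i)) (v i (Suc j'))
          + scl (of_nat (Suc j') * - of_nat (Suc i)) (v i (Suc j'))"
      by (simp only: Dh2.funpow_scl Dh2.scl scl_scl v_def funpow_Suc_right comp_apply)
    also have "\<dots> = scl (of_nat (Suc i) * (of_nat d - of_nat i - of_nat (Suc j'))) (v i (Suc j'))"
      by (simp only: scl_add_left[symmetric]) (simp add: algebra_simps)
    finally show ?thesis
      using Suc by simp
  qed (use D3_Dh3_power_a[of i] in \<open>simp add: v_def\<close>)
qed

lemma E1_v: "E1 n (v i j) = scl (of_nat j - of_nat i) (v i j)"
  using Dh2.eigenvector_funpow[where n = n and X = "E1 n" and e = 1 and c = "- of_nat i",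
      of "(Dh3 n ^^ i) a" j]
  by (simp add: v_def E1_Dh2_comm E1_Dh3_power_a)

lemma E2_v: "E2 n (v i j) = scl (of_nat d - of_nat i - 2 * of_nat j) (v i j)"
  using Dh2.eigenvector_funpow[where n = n and X = "E2 n" and e = "- 2",
      of "(Dh3 n ^^ i) a" "of_nat d - of_nat i" j]
  by (simp add: v_def E2_Dh2_comm E2_Dh3_power_a algebra_simps)

lemma v_in_KA: "v i j \<in> KA n"
proof -
  have "x \<in> KA n \<Longrightarrow> Dh2 n x \<in> KA n" "x \<in> KA n \<Longrightarrow> Dh3 n x \<in> KA n" for x
    by (simp_all add: sl3_ops_KA sl3_ops_def)
  then show ?thesis
    unfolding v_def by (intro funpow_closed in_KA)
qed

text \<open>\<open>Dh1\<close> moves along the antidiagonals \<open>i + j = const\<close>, and \<open>v 0 (Suc d) = 0\<close> by assumption.\<close>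

lemma v_antidiagonal_eq_0: "k \<le> Suc d \<Longrightarrow> v k (Suc d - k) = 0"
proof (induction k)
  case (Suc k)
  then have "Dh1 n (v k (Suc (d - k))) = 0"
    by (simp add: Suc_diff_le)
  then show ?case
    by (simp add: Dh1_v scl_eq_0_iff del: of_nat_Suc)
qed (simp add: v_def Dh2_power_a del: funpow.simps)

lemma v_eq_0: "d < i + j \<Longrightarrow> v i j = 0"
proof (cases "i \<le> Suc d")
  case True
  assume "d < i + j"
  then have "v i j = (Dh2 n ^^ (j - (Suc d - i) + (Suc d - i))) ((Dh3 n ^^ i) a)"
    by (simp add: v_def)
  also have "\<dots> = (Dh2 n ^^ (j - (Suc d - i))) (v i (Suc d - i))"
    by (simp only: funpow_add comp_apply v_def)
  finally show ?thesis
    using v_antidiagonal_eq_0[OF True] by simp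
next
  case False
  then have "v i j = (Dh2 n ^^ j) ((Dh3 n ^^ (i - Suc d + Suc d)) a)"
    by (simp add: v_def)
  also have "\<dots> = (Dh2 n ^^ j) ((Dh3 n ^^ (i - Suc d)) (v (Suc d) 0))"
    by (simp only: funpow_add comp_apply v_def funpow_0 id_apply)
  finally show ?thesis
    using v_antidiagonal_eq_0[of "Suc d"] by simp
qed

definition Cbar :: "'k mpoly set" where
  "Cbar = SM.span {scl ((-1) ^ (i + j) / (\<Prod>t<i + j. of_nat (d - t))) (v i j) | i j. i + j \<le> d}"

lemma subspace_Cbar: "SM.subspace Cbar"
  and zero_in_Cbar: "0 \<in> Cbar"
  and Cbar_scl: "x \<in> Cbar \<Longrightarrow> scl c x \<in> Cbar"
  unfolding Cbar_def by (simp_all add: SM.span_zero SM.span_scale)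

lemma Cbar_eq_span_v: "Cbar = SM.span ((\<lambda>(i, j). v i j) ` {(i, j). i + j \<le> d})"
proof -
  let ?c = "\<lambda>i j. (-1) ^ (i + j) / (\<Prod>t<i + j. of_nat (d - t)) :: 'k"
  let ?T = "(\<lambda>(i, j). v i j) ` {(i, j). i + j \<le> d}"
  have "scl (?c i j) (v i j) \<in> SM.span ?T" if "i + j \<le> d" for i j
    using that by (intro SM.span_scale SM.span_base rev_image_eqI[of "(i, j)"]) auto
  moreover have "v i j \<in> Cbar" if "i + j \<le> d" for i j
  proof -
    have "scl (inverse (?c i j)) (scl (?c i j) (v i j)) \<in> Cbar"
      unfolding Cbar_def using that by (intro SM.span_scale SM.span_base) blast
    moreover have "?c i j \<noteq> 0"
      using that by simp
    ultimately show ?thesis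
      by (simp add: scl_scl)
  qed
  ultimately show ?thesis
    unfolding Cbar_def SM.span_eq by (auto simp flip: Cbar_def)
qed

lemma v_in_Cbar: "v i j \<in> Cbar"
  by (cases "i + j \<le> d") (auto simp: Cbar_eq_span_v v_eq_0 SM.span_zero intro!: SM.span_base)

lemma sl3_ops_v_in_Cbar: "D \<in> sl3_ops n \<Longrightarrow> D (v i j) \<in> Cbar"
  unfolding sl3_ops_def
  by (cases i; cases j)
    (auto simp: Dh1_v Dh2_v Dh3_v D1_v D2_v D3_v E1_v E2_v v_in_Cbar zero_in_Cbar Cbar_scl)

lemma sl3_ops_Cbar:
  assumes "D \<in> sl3_ops n"
  shows "D ` Cbar \<subseteq> Cbar"
proof -
  interpret D: derivation D
    using assms by (rule derivation_sl3_ops)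
  interpret module_hom scl scl D
    by (rule D.module_hom)
  have "SM.span ((\<lambda>(i, j). v i j) ` {(i, j). i + j \<le> d}) \<subseteq> D -` Cbar"
    by (intro SM.span_minimal subspace_vimage subspace_Cbar)
      (auto simp: sl3_ops_v_in_Cbar[OF assms])
  then show ?thesis
    by (auto simp flip: Cbar_eq_span_v)
qed

lemma sl3_submodule_Cbar: "sl3_submodule n Cbar"
proof -
  have "Cbar \<subseteq> KA n"
    unfolding Cbar_eq_span_v by (rule SM.span_minimal) (auto simp: v_in_KA subspace_KA)
  then show ?thesis
    using sl3_ops_Cbar subspace_Cbar by (auto simp: sl3_submodule_def)
qed

lemma D2_power_v:
  "k \<le> j \<Longrightarrow> \<exists>\<kappa>. (D2 n ^^ k) (v i j) = scl \<kappa> (v i (j - k)) \<and> (i + j \<le> d \<longrightarrow> \<kappa> \<noteq> 0)"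
proof (induction k)
  case (Suc k)
  then obtain \<kappa> where \<kappa>: "(D2 n ^^ k) (v i j) = scl \<kappa> (v i (j - k))" "i + j \<le> d \<longrightarrow> \<kappa> \<noteq> 0"
    by auto
  let ?c = "of_nat (Suc (j - Suc k)) * (of_nat d - of_nat i - of_nat (j - Suc k)) :: 'k"
  have "j - k = Suc (j - Suc k)"
    using Suc.prems by simp
  then have "(D2 n ^^ Suc k) (v i j) = scl (\<kappa> * ?c) (v i (j - Suc k))"
    by (simp add: \<kappa>(1) D2_v scl_scl)
  moreover have "i + j \<le> d \<longrightarrow> \<kappa> * ?c \<noteq> 0"
  proof
    assume "i + j \<le> d"
    then have "(of_nat d - of_nat i - of_nat (j - Suc k) :: 'k) \<noteq> 0"
      using Suc.prems by (intro of_nat_diff_diff_neq_0) simp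
    moreover have "(of_nat (Suc (j - Suc k)) :: 'k) \<noteq> 0"
      by (simp only: of_nat_eq_0_iff nat.simps not_False_eq_True)
    ultimately show "\<kappa> * ?c \<noteq> 0"
      using \<kappa>(2) \<open>i + j \<le> d\<close> by (auto simp only: mult_eq_0_iff)
  qed
  ultimately show ?case
    by blast
qed (auto intro: exI[of _ 1])

lemma D3_power_v:
  "k \<le> i \<Longrightarrow> \<exists>\<kappa>. (D3 n ^^ k) (v i j) = scl \<kappa> (v (i - k) j) \<and> (i + j \<le> d \<longrightarrow> \<kappa> \<noteq> 0)"
proof (induction k)
  case (Suc k)
  then obtain \<kappa> where \<kappa>: "(D3 n ^^ k) (v i j) = scl \<kappa> (v (i - k) j)" "i + j \<le> d \<longrightarrow> \<kappa> \<noteq> 0"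
    by auto
  let ?c = "of_nat (Suc (i - Suc k)) * (of_nat d - of_nat (i - Suc k) - of_nat j) :: 'k"
  have "i - k = Suc (i - Suc k)"
    using Suc.prems by simp
  then have "(D3 n ^^ Suc k) (v i j) = scl (\<kappa> * ?c) (v (i - Suc k) j)"
    by (simp add: \<kappa>(1) D3_v scl_scl)
  moreover have "i + j \<le> d \<longrightarrow> \<kappa> * ?c \<noteq> 0"
  proof
    assume "i + j \<le> d"
    then have "(of_nat d - of_nat (i - Suc k) - of_nat j :: 'k) \<noteq> 0"
      using Suc.prems by (intro of_nat_diff_diff_neq_0) simp
    moreover have "(of_nat (Suc (i - Suc k)) :: 'k) \<noteq> 0"
      by (simp only: of_nat_eq_0_iff nat.simps not_False_eq_True)
    ultimately show "\<kappa> * ?c \<noteq> 0"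
      using \<kappa>(2) \<open>i + j \<le> d\<close> by (auto simp only: mult_eq_0_iff)
  qed
  ultimately show ?case
    by blast
qed (auto intro: exI[of _ 1])

lemma D2_power_v_eq_0: "j < k \<Longrightarrow> (D2 n ^^ k) (v i j) = 0"
proof -
  assume "j < k"
  then have "(D2 n ^^ k) (v i j) = (D2 n ^^ (k - Suc j)) ((D2 n ^^ Suc j) (v i j))"
    by (metis Suc_leI funpow_add comp_apply le_add_diff_inverse2)
  then show ?thesis
    using D2_power_v[of j j i] by (auto simp: D2_v)
qed

lemma D3_power_v_eq_0: "i < k \<Longrightarrow> (D3 n ^^ k) (v i j) = 0"
proof -
  assume "i < k"
  then have "(D3 n ^^ k) (v i j) = (D3 n ^^ (k - Suc i)) ((D3 n ^^ Suc i) (v i j))"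
    by (metis Suc_leI funpow_add comp_apply le_add_diff_inverse2)
  then show ?thesis
    using D3_power_v[of i i j] by (auto simp: D3_v)
qed

lemma lowering_v_eq_0:
  assumes "i + j \<le> i0 + j0" "(i, j) \<noteq> (i0, j0)"
  shows "(D3 n ^^ i0) ((D2 n ^^ j0) (v i j)) = 0"
proof (cases "j < j0")
  case False
  then have "i < i0"
    using assms by auto
  obtain \<kappa> where "(D2 n ^^ j0) (v i j) = scl \<kappa> (v i (j - j0))"
    using D2_power_v[of j0 j i] False by auto
  then show ?thesis
    by (simp add: D3.funpow_scl D3_power_v_eq_0[OF \<open>i < i0\<close>])
qed (simp add: D2_power_v_eq_0)

lemma lowering_v_top:
  assumes "i0 + j0 \<le> d"
  shows "\<exists>\<kappa>. \<kappa> \<noteq> 0 \<and> (D3 n ^^ i0) ((D2 n ^^ j0) (v i0 j0)) = scl \<kappa> a"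
proof -
  obtain \<kappa>1 where \<kappa>1: "(D2 n ^^ j0) (v i0 j0) = scl \<kappa>1 (v i0 0)" "\<kappa>1 \<noteq> 0"
    using D2_power_v[of j0 j0 i0] assms by auto
  obtain \<kappa>2 where \<kappa>2: "(D3 n ^^ i0) (v i0 0) = scl \<kappa>2 a" "\<kappa>2 \<noteq> 0"
    using D3_power_v[of i0 i0 0] assms by (auto simp: v_0_0)
  show ?thesis
    using \<kappa>1 \<kappa>2 by (intro exI[of _ "\<kappa>1 * \<kappa>2"]) (simp add: D3.funpow_scl scl_scl)
qed

lemma lowering_sum_v:
  assumes "finite N" "(i0, j0) \<in> N" "\<And>i j. (i, j) \<in> N \<Longrightarrow> i + j \<le> i0 + j0" "i0 + j0 \<le> d"
  shows "\<exists>\<kappa>. \<kappa> \<noteq> 0 \<and>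
    (D3 n ^^ i0) ((D2 n ^^ j0) (\<Sum>(i, j)\<in>N. scl (c i j) (v i j))) = scl (c i0 j0 * \<kappa>) a"
proof -
  obtain \<kappa> where \<kappa>: "\<kappa> \<noteq> 0" "(D3 n ^^ i0) ((D2 n ^^ j0) (v i0 j0)) = scl \<kappa> a"
    using lowering_v_top[OF assms(4)] by blast
  have "(D3 n ^^ i0) ((D2 n ^^ j0) (\<Sum>(i, j)\<in>N. scl (c i j) (v i j)))
      = (\<Sum>(i, j)\<in>N. scl (c i j) ((D3 n ^^ i0) ((D2 n ^^ j0) (v i j))))"
    by (simp add: D2.funpow_sum D3.funpow_sum D2.funpow_scl D3.funpow_scl case_prod_unfold)
  also have "\<dots> = scl (c i0 j0) ((D3 n ^^ i0) ((D2 n ^^ j0) (v i0 j0)))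
      + (\<Sum>(i, j)\<in>N - {(i0, j0)}. scl (c i j) ((D3 n ^^ i0) ((D2 n ^^ j0) (v i j))))"
    using assms(1,2) by (simp add: sum.remove)
  also have "(\<Sum>(i, j)\<in>N - {(i0, j0)}. scl (c i j) ((D3 n ^^ i0) ((D2 n ^^ j0) (v i j)))) = 0"
  proof (intro sum.neutral ballI)
    fix t assume "t \<in> N - {(i0, j0)}"
    with assms(3) show "(case t of (i, j) \<Rightarrow> scl (c i j) ((D3 n ^^ i0) ((D2 n ^^ j0) (v i j)))) = 0"
      by (cases t) (simp add: lowering_v_eq_0)
  qed
  finally show ?thesis
    using \<kappa> by (auto simp: scl_scl)
qed

lemma a_in_nonzero_submodule:
  assumes W: "sl3_submodule n W" "W \<subseteq> Cbar" "W \<noteq> {0}"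
  shows "a \<in> W"
proof -
  let ?T = "{(i, j). i + j \<le> d}"
  have subspace_W: "SM.subspace W"
    using W(1) by (simp add: sl3_submodule_def)
  obtain w where w: "w \<in> W" "w \<noteq> 0"
    using W(3) SM.subspace_0[OF subspace_W] by blast
  have "w \<in> SM.span ((\<lambda>(i, j). v i j) ` ?T)"
    using w(1) W(2) by (auto simp: Cbar_eq_span_v)
  then obtain c where "w = (\<Sum>t\<in>?T. scl (c t) ((\<lambda>(i, j). v i j) t))"
    using span_image_eq_sum[OF finite_triangle] by blast
  also have "\<dots> = (\<Sum>(i, j)\<in>?T. scl (c (i, j)) (v i j))"
    by (rule sum.cong) auto
  finally have w_T: "w = (\<Sum>(i, j)\<in>?T. scl (c (i, j)) (v i j))" .
  define N where "N = {(i, j) \<in> ?T. scl (c (i, j)) (v i j) \<noteq> 0}"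
  have "finite N"
    by (rule finite_subset[OF _ finite_triangle]) (auto simp: N_def)
  have w_N: "w = (\<Sum>(i, j)\<in>N. scl (c (i, j)) (v i j))"
    unfolding w_T by (rule sum.mono_neutral_right[OF finite_triangle]) (auto simp: N_def)
  have "N \<noteq> {}"
    using w(2) w_N by auto
  then obtain i0 j0 where top: "(i0, j0) \<in> N" "\<And>i j. (i, j) \<in> N \<Longrightarrow> i + j \<le> i0 + j0"
    using ex_has_greatest_nat[of "\<lambda>t. t \<in> N" _ "\<lambda>(i, j). i + j" "Suc d"] by (force simp: N_def)
  then have "c (i0, j0) \<noteq> 0" "i0 + j0 \<le> d"
    by (auto simp: N_def)
  obtain \<kappa> where "\<kappa> \<noteq> 0" "(D3 n ^^ i0) ((D2 n ^^ j0) w) = scl (c (i0, j0) * \<kappa>) a"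
    using lowering_sum_v[of N i0 j0 "\<lambda>i j. c (i, j)"] top \<open>i0 + j0 \<le> d\<close> \<open>finite N\<close>
    by (auto simp: w_N)
  moreover have "(D3 n ^^ i0) ((D2 n ^^ j0) w) \<in> W"
    using W(1) w(1) by (auto simp: sl3_submodule_def sl3_ops_def intro!: funpow_closed)
  ultimately have "scl (inverse (c (i0, j0) * \<kappa>)) (scl (c (i0, j0) * \<kappa>) a) \<in> W"
    using SM.subspace_scale[OF subspace_W] by metis
  moreover have "c (i0, j0) * \<kappa> \<noteq> 0"
    using \<open>c (i0, j0) \<noteq> 0\<close> \<open>\<kappa> \<noteq> 0\<close> by simp
  ultimately show ?thesis
    by (metis scl_scl left_inverse scl_one)
qed

lemma irreducible_Cbar: "irreducible_sl3_submodule n Cbar"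
  unfolding irreducible_sl3_submodule_def
proof (intro conjI allI impI)
  show "sl3_submodule n Cbar"
    by (rule sl3_submodule_Cbar)
  show "Cbar \<noteq> {0}"
    using v_in_Cbar[of 0 0] nonzero by (auto simp: v_0_0)
  fix W
  assume W: "sl3_submodule n W \<and> W \<subseteq> Cbar"
  show "W = {0} \<or> W = Cbar"
  proof (cases "W = {0}")
    case False
    then have "a \<in> W"
      using W a_in_nonzero_submodule by blast
    then have "v i j \<in> W" for i j
      using W unfolding v_def by (auto simp: sl3_submodule_def sl3_ops_def intro!: funpow_closed)
    moreover have "SM.subspace W"
      using W by (simp add: sl3_submodule_def)
    ultimately have "Cbar \<subseteq> W"
      unfolding Cbar_eq_span_v by (intro SM.span_minimal) auto
    with W show ?thesis
      by blast
  qed simp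
qed

lemma iso_Gamma_Cbar: "iso_Gamma n Cbar 0 d"
  unfolding iso_Gamma_def
proof (intro conjI)
  show "irreducible_sl3_submodule n Cbar"
    by (rule irreducible_Cbar)
  show "\<exists>B. finite B \<and> Cbar = SM.span B"
    using finite_triangle by (auto simp: Cbar_eq_span_v)
  show "\<exists>v\<in>Cbar. v \<noteq> 0 \<and> D1 n v = 0 \<and> D2 n v = 0 \<and> D3 n v = 0 \<and>
      E1 n v = scl (of_nat 0) v \<and> E2 n v = scl (of_nat d) v"
    using v_in_Cbar[of 0 0] nonzero D1_a D2_a D3_a E1_a E2_a by (auto simp: v_0_0)
qed

definition casimir_term :: "nat \<Rightarrow> nat \<Rightarrow> 'k mpoly" where
  "casimir_term i j = scl (casimir_coeff i j)
     (v i j * Var (U 3) ^ (d - (i + j)) * Var (U 1) ^ i * Var (U 2) ^ j)"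

definition casimir :: "'k mpoly" where
  "casimir = (\<Sum>(i, j)\<in>{(i, j). i + j \<le> d}. casimir_term i j)"

lemma casimir_term_eq_0: "d < i + j \<Longrightarrow> casimir_term i j = 0"
  by (simp add: casimir_term_def v_eq_0)

lemma casimir_square_sum: "casimir = (\<Sum>i<Suc d. \<Sum>j<Suc d. casimir_term i j)"
proof -
  have "casimir = (\<Sum>(i, j)\<in>{..<Suc d} \<times> {..<Suc d}. casimir_term i j)"
    unfolding casimir_def
    by (rule sum.mono_neutral_left) (auto, meson casimir_term_eq_0 not_le)
  then show ?thesis
    by (simp only: sum.cartesian_product)
qed

lemma Dh2_casimir: "Dh2 n casimir = 0"
proof -
  define f where "f i j = scl (casimir_coeff i j)
    (v i (Suc j) * Var (U 3) ^ (d - (i + j)) * Var (U 1) ^ i * Var (U 2) ^ j)" for i j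
  define g where "g i j = scl (casimir_coeff i j)
    (v i j * Var (U 3) ^ (d - (i + j)) * Var (U 1) ^ i
      * (of_nat j * Var (U 2) ^ (j - 1) * Var (U 3)))" for i j
  have Dh2_term: "Dh2 n (casimir_term i j) = f i j + g i j" for i j
    unfolding casimir_term_def f_def g_def by (simp add: Dh2.mult_powers Dh2_v scl_add_right)
  have g_Suc: "g i (Suc j) = - f i j" for i j
  proof (cases "i + Suc j \<le> d")
    case True
    then have "d - (i + j) = Suc (d - (i + Suc j))"
      by simp
    then show ?thesis
      unfolding f_def g_def casimir_coeff_Suc_right[of i j]
      by (simp add: scl_def Const_simps algebra_simps)
  qed (simp add: f_def g_def v_eq_0)
  have "g i 0 = 0" "f i d = 0" for i
    by (simp_all add: g_def f_def v_eq_0)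
  then have "(\<Sum>j<Suc d. g i j) = (\<Sum>j<Suc d. - f i j)" for i
    by (intro sum_lessThan_Suc_shift_eq) (simp_all add: g_Suc)
  then show ?thesis
    by (simp add: casimir_square_sum Dh2.sum Dh2_term sum.distrib sum_negf del: sum.lessThan_Suc)
qed

lemma Dh1_casimir: "Dh1 n casimir = 0"
proof -
  define f where "f i j = scl (casimir_coeff i j)
    (Dh1 n (v i j) * Var (U 3) ^ (d - (i + j)) * Var (U 1) ^ i * Var (U 2) ^ j)" for i j
  define g where "g i j = scl (casimir_coeff i j)
    (v i j * Var (U 3) ^ (d - (i + j)) * (of_nat i * Var (U 1) ^ (i - 1) * Var (U 2))
      * Var (U 2) ^ j)" for i j
  define h where "h i j = scl (casimir_coeff i j)
    (v (Suc i) j * Var (U 3) ^ (d - Suc (i + j)) * Var (U 1) ^ i * Var (U 2) ^ Suc j)" for i j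
  have Dh1_term: "Dh1 n (casimir_term i j) = f i j + g i j" for i j
    unfolding casimir_term_def f_def g_def by (simp add: Dh1.mult_powers scl_add_right)
  have "f i 0 = 0" "f i (Suc j) = h i j" for i j
    unfolding f_def h_def casimir_coeff_Suc_right[of i j]
    by (simp_all add: Dh1_v scl_def Const_simps algebra_simps)
  then have f_sum: "(\<Sum>j<Suc d. f i j) = (\<Sum>j<Suc d. h i j)" for i
    by (intro sum_lessThan_Suc_shift_eq) (simp_all add: h_def v_eq_0)
  have "g 0 j = 0" "g (Suc i) j = - h i j" for i j
    unfolding g_def h_def casimir_coeff_Suc_left[of i j]
    by (simp_all add: scl_def Const_simps algebra_simps)
  then have g_sum: "(\<Sum>i<Suc d. g i j) = (\<Sum>i<Suc d. - h i j)" for j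
    by (intro sum_lessThan_Suc_shift_eq) (simp_all add: h_def v_eq_0)
  have "Dh1 n casimir = (\<Sum>i<Suc d. \<Sum>j<Suc d. h i j) + (\<Sum>j<Suc d. \<Sum>i<Suc d. g i j)"
    by (simp add: casimir_square_sum Dh1.sum Dh1_term sum.distrib f_sum sum.swap[of g]
        del: sum.lessThan_Suc)
  also have "\<dots> = 0"
    by (simp add: g_sum sum_negf sum.swap[of h] del: sum.lessThan_Suc)
  finally show ?thesis .
qed

lemma D3_casimir: "D3 n casimir = 0"
proof -
  define f where "f i j = scl (casimir_coeff i j)
    (D3 n (v i j) * Var (U 3) ^ (d - (i + j)) * Var (U 1) ^ i * Var (U 2) ^ j)" for i j
  define g where "g i j = scl (casimir_coeff i j)
    (v i j * (of_nat (d - (i + j)) * Var (U 3) ^ (d - (i + j) - 1) * Var (U 1))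
      * Var (U 1) ^ i * Var (U 2) ^ j)"
    for i j
  have D3_term: "D3 n (casimir_term i j) = f i j + g i j" for i j
    unfolding casimir_term_def f_def g_def by (simp add: D3.mult_powers scl_add_right)
  have f_Suc: "f (Suc i) j = - g i j" for i j
  proof (cases "i + j < d")
    case True
    then have "d - (i + j) = Suc (d - Suc (i + j))"
      and "(of_nat d - of_nat i - of_nat j :: 'k) = of_nat (d - (i + j))"
      by (simp_all add: of_nat_diff)
    then show ?thesis
      unfolding f_def g_def casimir_coeff_Suc_left[of i j]
      by (simp add: D3_v scl_def Const_simps algebra_simps)
  next
    case False
    then have "d < i + j \<or> d = i + j"
      by auto
    then show ?thesis
      by (auto simp: f_def g_def D3_v v_eq_0)
  qed
  have "f 0 j = 0" for j
    by (simp add: f_def D3_v)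
  then have f_sum: "(\<Sum>i<Suc d. f i j) = (\<Sum>i<Suc d. - g i j)" for j
    by (intro sum_lessThan_Suc_shift_eq) (simp_all add: f_Suc g_def)
  show ?thesis
    by (simp add: casimir_square_sum D3.sum D3_term sum.distrib sum.swap[of f] sum.swap[of g] f_sum
        sum_negf del: sum.lessThan_Suc)
qed

lemma sl3_ops_casimir: "D \<in> sl3_ops n \<Longrightarrow> D casimir = 0"
proof -
  have Dh3: "Dh3 n casimir = 0"
    using Dh1_Dh2_comm[of n casimir] by (simp add: Dh1_casimir Dh2_casimir)
  have D1: "D1 n casimir = 0"
    using D3_Dh2_comm[of n casimir] by (simp add: D3_casimir Dh2_casimir)
  have D2: "D2 n casimir = 0"
    using Dh1_D3_comm[of n casimir] by (simp add: D3_casimir Dh1_casimir)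
  have E1: "E1 n casimir = 0"
    using D1_Dh1_comm[of n casimir] by (simp add: D1 Dh1_casimir)
  have E2: "E2 n casimir = 0"
    using D2_Dh2_comm[of n casimir] by (simp add: D2 Dh2_casimir)
  show "D \<in> sl3_ops n \<Longrightarrow> D casimir = 0"
    using Dh1_casimir Dh2_casimir D3_casimir Dh3 D1 D2 E1 E2 by (auto simp: sl3_ops_def)
qed

lemma contravariant_casimir: "contravariant n d casimir"
  unfolding contravariant_def
proof (intro conjI ballI)
  show "casimir \<in> KAU n"
    unfolding casimir_def casimir_term_def
    using KA_subset_KAU v_in_KA
    by (auto intro!: KAU_sum KAU_scl KAU_mult KAU_power Var_U_in_KAU)
  have "u_homogeneous d (casimir_term i j)" if "i + j \<le> d" for i j
  proof -
    have "u_homogeneous (0 + 1 * (d - (i + j)) + 1 * i + 1 * j)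
        (v i j * Var (U 3) ^ (d - (i + j)) * Var (U 1) ^ i * Var (U 2) ^ j)"
      by (intro u_homogeneous_mult u_homogeneous_power u_homogeneous_Var_U
          u_homogeneous_KA[OF v_in_KA])
    then show ?thesis
      using that by (simp add: casimir_term_def u_homogeneous_scl)
  qed
  then have "u_homogeneous d casimir"
    unfolding casimir_def by (auto intro: u_homogeneous_sum)
  then show "udeg m = d" if "m \<in> Poly_Mapping.keys casimir" for m
    using that by (simp add: u_homogeneous_def)
  show "D casimir = 0" if "D \<in> sl3_ops n" for D
    using that by (rule sl3_ops_casimir)
qed

end

lemma highest_weight_vectorI:
  fixes a :: "'k::field_char_0 mpoly"
  assumes "a \<noteq> 0" "a \<in> KA n" "isobaric n a" "D1 n a = 0" "D2 n a = 0" "D3 n a = 0"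
    and "ord (Dh1 n) a = 0" "ord (Dh2 n) a = d"
  shows "highest_weight_vector n d a"
proof -
  obtain k1 k2 where k: "(Dh1 n ^^ k1) a = 0" "(Dh2 n ^^ k2) a = 0"
    using Dh1_locally_nilpotent Dh2_locally_nilpotent by blast
  have Dh1_a: "Dh1 n a = 0"
    using Dh1.funpow_ord(2)[OF k(1) assms(1)] assms(7) by simp
  have Dh2_power: "(Dh2 n ^^ d) a \<noteq> 0" "(Dh2 n ^^ Suc d) a = 0"
    using Dh2.funpow_ord[OF k(2) assms(1)] assms(8) by simp_all
  obtain c where E2_a: "E2 n a = scl c a"
    using assms(3) by (auto simp: isobaric_def)
  have "D2 n ((Dh2 n ^^ Suc d) a) = scl (of_nat (Suc d) * (c - of_nat d)) ((Dh2 n ^^ d) a)"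
    by (rule Dh2.sl2_lowering[where H = "E2 n"])
      (simp_all add: D2_Dh2_comm E2_Dh2_comm assms(5) E2_a)
  then have "c = of_nat d"
    using Dh2_power by (simp add: scl_eq_0_iff del: of_nat_Suc)
  moreover have "E1 n a = 0"
    using D1_Dh1_comm[of n a] assms(4) Dh1_a by simp
  ultimately show ?thesis
    using assms Dh1_a Dh2_power E2_a by unfold_locales simp_all
qed

theorem mainTheorem7:
  fixes n d :: nat and a :: "'k::field_char_0 mpoly"
  assumes "n \<ge> 1"
    and "irreducible_UT3 n a"
    and "homogeneous a"
    and "isobaric n a"
    and "D1 n a = 0" and "D2 n a = 0" and "D3 n a = 0"
    and "ord (Dh1 n) a = 0"
    and "ord (Dh2 n) a = d"
  shows "iso_Gamma n
           (module.span scl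
              {scl ((-1) ^ (i + j) / (\<Prod>t<i + j. of_nat (d - t)))
                   ((Dh2 n ^^ j) ((Dh3 n ^^ i) a)) | i j. i + j \<le> d})
           0 d \<and>
         contravariant n d
           (\<Sum>(i, j)\<in>{(i, j). i + j \<le> d}.
              scl ((-1) ^ (i + j) / (fact i * fact j))
                  ((Dh2 n ^^ j) ((Dh3 n ^^ i) a)
                   * Var (U 3) ^ (d - (i + j)) * Var (U 1) ^ i * Var (U 2) ^ j))"
proof -
  have "a \<noteq> 0" "a \<in> KA n"
    using assms(2) by (auto simp: irreducible_UT3_def UT3_inv_def)
  then interpret highest_weight_vector n d a
    using assms(4-9) by (rule highest_weight_vectorI)
  show ?thesis
    using iso_Gamma_Cbar contravariant_casimir
    unfolding Cbar_def casimir_def casimir_term_def casimir_coeff_def v_def ..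
qed

end
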